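(* Let $H$ be a weak Hopf algebra, and in ${H_{par}^w}$ put $E_h=[h_1][S(h_2)]$ and $\tilde E_h=[S(h_1)][h_2]$ for $h\in H$. Then for all $h,k\in H$: (a) $E_k[S(h)]=[S(h_1)]E_{h_2k}$; (b) $[h]E_k=E_{h_1k}[h_2]$; (c) $E_{h_1}E_{h_2}=E_h$; (d) $\tilde E_k[h]=[h_1]\tilde E_{kh_2}$; (e) $[S(h)]\tilde E_k=\tilde E_{kh_1}[S(h_2)]$; (f) $\tilde E_{h_1}\tilde E_{h_2}=\tilde E_h$; (g) $[h]E_k=[h_1]E_k\tilde E_{h_2}$; (h) $E_k[S(h)]=\tilde E_{h_1}E_k[S(h_2)]$; (i) $\tilde E_k[h]=E_{h_1}\tilde E_k[h_2]$; (j) $[S(h)]\tilde E_k=[S(h_1)]\tilde E_kE_{h_2}$; (k) $E_h\tilde E_k=\tilde E_kE_h$; (l) if $S$ is invertible, $\tilde E_{kS^{-1}(h_3)h_1}\tilde E_{h_2}=\tilde E_h\tilde E_k$; (m) $E_{h_1S(h_3)}E_{h_2}=E_h$; (n) if $H$ is cocommutative, $E_hE_k=E_kE_h$.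
   Context: All algebras are associative and unital over a field $\Bbbk$; Sweedler notation $\Delta(h)=h_1\otimes h_2$, $\Delta^2(h)=h_1\otimes h_2\otimes h_3$. A weak Hopf algebra is $(H,m,u,\Delta,\varepsilon,S)$ with $H$ an algebra, $(H,\Delta,\varepsilon)$ a coalgebra, and for all $g,h,k$: $\Delta(kh)=\Delta(k)\Delta(h)$; $\varepsilon(kh_1)\varepsilon(h_2g)=\varepsilon(khg)=\varepsilon(kh_2)\varepsilon(h_1g)$; $(1\otimes\Delta(1))(\Delta(1)\otimes1)=\Delta^2(1)=(\Delta(1)\otimes1)(1\otimes\Delta(1))$; $h_1S(h_2)=\varepsilon(1_1h)1_2$; $S(h_1)h_2=1_1\varepsilon(h1_2)$; $S(h)=S(h_1)h_2S(h_3)$, where $\Delta(1)=1_1\otimes1_2$. ${H_{par}^w}=T(H)/I$, where $T(H)$ is the tensor algebra of the vector space $H$ and $I$ is the ideal generated by, for all $h,k\in H$: $1_H-1_{T(H)}$; $h\otimes k_1\otimes S(k_2)-hk_1\otimes S(k_2)$; $h\otimes S(k_1)\otimes k_2-hS(k_1)\otimes k_2$; $h_1\otimes S(h_2)\otimes k-h_1\otimes S(h_2)k$; $S(h_1)\otimes h_2\otimes k-S(h_1)\otimes h_2k$; $h-h_1\otimes S(h_2)\otimes h_3$; $[h]$ denotes the class of $h$. *)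

theory Defs
  imports Main "HOL.Vector_Spaces"
begin

text \<open>Elements of H\<otimes>H (resp. H\<otimes>H\<otimes>H) are represented by finite formal sums,
  i.e. lists of pairs (triples).  Two representations denote the same tensor iff
  every k-bilinear (trilinear) form takes the same value on them.\<close>

definition sum2 :: "('h \<times> 'h) list \<Rightarrow> ('h \<Rightarrow> 'h \<Rightarrow> 'v::comm_monoid_add) \<Rightarrow> 'v" where
  "sum2 t f = sum_list (map (\<lambda>(a,b). f a b) t)"

definition sum3 :: "('h \<times> 'h \<times> 'h) list \<Rightarrow> ('h \<Rightarrow> 'h \<Rightarrow> 'h \<Rightarrow> 'v::comm_monoid_add) \<Rightarrow> 'v" where
  "sum3 t f = sum_list (map (\<lambda>(a,b,c). f a b c) t)"

definition bilin :: "('k::field \<Rightarrow> 'h::ab_group_add \<Rightarrow> 'h) \<Rightarrow> ('h \<Rightarrow> 'h \<Rightarrow> 'k) \<Rightarrow> bool" where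
  "bilin s f \<longleftrightarrow> (\<forall>b. Vector_Spaces.linear s (*) (\<lambda>a. f a b)) \<and> (\<forall>a. Vector_Spaces.linear s (*) (f a))"

definition trilin :: "('k::field \<Rightarrow> 'h::ab_group_add \<Rightarrow> 'h) \<Rightarrow> ('h \<Rightarrow> 'h \<Rightarrow> 'h \<Rightarrow> 'k) \<Rightarrow> bool" where
  "trilin s f \<longleftrightarrow> (\<forall>b c. Vector_Spaces.linear s (*) (\<lambda>a. f a b c))
      \<and> (\<forall>a c. Vector_Spaces.linear s (*) (\<lambda>b. f a b c))
      \<and> (\<forall>a b. Vector_Spaces.linear s (*) (f a b))"

definition teq2 :: "('k::field \<Rightarrow> 'h::ab_group_add \<Rightarrow> 'h) \<Rightarrow> ('h \<times> 'h) list \<Rightarrow> ('h \<times> 'h) list \<Rightarrow> bool" where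
  "teq2 s t u \<longleftrightarrow> (\<forall>f. bilin s f \<longrightarrow> sum2 t f = sum2 u f)"

definition teq3 :: "('k::field \<Rightarrow> 'h::ab_group_add \<Rightarrow> 'h) \<Rightarrow> ('h \<times> 'h \<times> 'h) list \<Rightarrow> ('h \<times> 'h \<times> 'h) list \<Rightarrow> bool" where
  "teq3 s t u \<longleftrightarrow> (\<forall>f. trilin s f \<longrightarrow> sum3 t f = sum3 u f)"

definition tmul2 :: "('h::times \<times> 'h) list \<Rightarrow> ('h \<times> 'h) list \<Rightarrow> ('h \<times> 'h) list" where
  "tmul2 t u = concat (map (\<lambda>(a,b). map (\<lambda>(c,d). (a*c, b*d)) u) t)"

definition cop2 :: "('h \<Rightarrow> ('h \<times> 'h) list) \<Rightarrow> 'h \<Rightarrow> ('h \<times> 'h \<times> 'h) list" where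
  "cop2 cop h = concat (map (\<lambda>(a,b). map (\<lambda>(c,d). (a,c,d)) (cop b)) (cop h))"

definition cop2L :: "('h \<Rightarrow> ('h \<times> 'h) list) \<Rightarrow> 'h \<Rightarrow> ('h \<times> 'h \<times> 'h) list" where
  "cop2L cop h = concat (map (\<lambda>(a,b). map (\<lambda>(c,d). (c,d,b)) (cop a)) (cop h))"

text \<open>Associative unital algebra over the field k (the zero algebra is allowed).\<close>
definition k_algebra :: "('k::field \<Rightarrow> 'h::{ring,monoid_mult} \<Rightarrow> 'h) \<Rightarrow> bool" where
  "k_algebra s \<longleftrightarrow> Vector_Spaces.vector_space s \<and>
     (\<forall>c x y. s c (x * y) = s c x * y \<and> s c (x * y) = x * s c y)"

definition weak_hopf_algebra ::
  "('k::field \<Rightarrow> 'h::{ring,monoid_mult} \<Rightarrow> 'h) \<Rightarrow> ('h \<Rightarrow> ('h \<times> 'h) list) \<Rightarrow> ('h \<Rightarrow> 'k) \<Rightarrow> ('h \<Rightarrow> 'h) \<Rightarrow> bool" where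
  "weak_hopf_algebra s cop eps S \<longleftrightarrow>
     k_algebra s
   \<comment> \<open>\<Delta> is linear\<close>
   \<and> (\<forall>x y. teq2 s (cop (x + y)) (cop x @ cop y))
   \<and> (\<forall>c x. teq2 s (cop (s c x)) (map (\<lambda>(a,b). (s c a, b)) (cop x)))
   \<and> Vector_Spaces.linear s (*) eps
   \<and> Vector_Spaces.linear s s S
   \<comment> \<open>coalgebra: coassociativity and counit\<close>
   \<and> (\<forall>h. teq3 s (cop2L cop h) (cop2 cop h))
   \<and> (\<forall>h. sum2 (cop h) (\<lambda>a b. s (eps a) b) = h)
   \<and> (\<forall>h. sum2 (cop h) (\<lambda>a b. s (eps b) a) = h)
   \<comment> \<open>\<Delta>(kh) = \<Delta>(k)\<Delta>(h)\<close>
   \<and> (\<forall>k h. teq2 s (cop (k * h)) (tmul2 (cop k) (cop h)))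
   \<comment> \<open>weak multiplicativity of the counit\<close>
   \<and> (\<forall>k h g. sum2 (cop h) (\<lambda>a b. eps (k * a) * eps (b * g)) = eps (k * h * g))
   \<and> (\<forall>k h g. sum2 (cop h) (\<lambda>a b. eps (k * b) * eps (a * g)) = eps (k * h * g))
   \<comment> \<open>weak comultiplicativity of the unit\<close>
   \<and> teq3 s (concat (map (\<lambda>(c,d). map (\<lambda>(a,b). (a, c * b, d)) (cop 1)) (cop 1))) (cop2 cop 1)
   \<and> teq3 s (concat (map (\<lambda>(a,b). map (\<lambda>(c,d). (a, b * c, d)) (cop 1)) (cop 1))) (cop2 cop 1)
   \<comment> \<open>antipode axioms\<close>
   \<and> (\<forall>h. sum2 (cop h) (\<lambda>a b. a * S b) = sum2 (cop 1) (\<lambda>a b. s (eps (a * h)) b))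
   \<and> (\<forall>h. sum2 (cop h) (\<lambda>a b. S a * b) = sum2 (cop 1) (\<lambda>a b. s (eps (h * b)) a))
   \<and> (\<forall>h. S h = sum3 (cop2 cop h) (\<lambda>a b c. S a * b * S c))"

text \<open>A k-algebra A with a linear map \<pi> : H \<rightarrow> A satisfying the defining relations
  of H_par^w (i.e. \<pi> factors through the canonical map H \<rightarrow> H_par^w, h \<mapsto> [h]).\<close>
definition par_rep ::
  "('k::field \<Rightarrow> 'h::{ring,monoid_mult} \<Rightarrow> 'h) \<Rightarrow> ('h \<Rightarrow> ('h \<times> 'h) list) \<Rightarrow> ('h \<Rightarrow> 'h)
   \<Rightarrow> ('k \<Rightarrow> 'a::{ring,monoid_mult} \<Rightarrow> 'a) \<Rightarrow> ('h \<Rightarrow> 'a) \<Rightarrow> bool" where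
  "par_rep s cop S sA p \<longleftrightarrow>
     k_algebra sA \<and> Vector_Spaces.linear s sA p
   \<and> p 1 = 1
   \<and> (\<forall>h k. sum2 (cop k) (\<lambda>a b. p h * p a * p (S b)) = sum2 (cop k) (\<lambda>a b. p (h * a) * p (S b)))
   \<and> (\<forall>h k. sum2 (cop k) (\<lambda>a b. p h * p (S a) * p b) = sum2 (cop k) (\<lambda>a b. p (h * S a) * p b))
   \<and> (\<forall>h k. sum2 (cop h) (\<lambda>a b. p a * p (S b) * p k) = sum2 (cop h) (\<lambda>a b. p a * p (S b * k)))
   \<and> (\<forall>h k. sum2 (cop h) (\<lambda>a b. p (S a) * p b * p k) = sum2 (cop h) (\<lambda>a b. p (S a) * p (b * k)))
   \<and> (\<forall>h. p h = sum3 (cop2 cop h) (\<lambda>a b c. p a * p (S b) * p c))"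

definition Epar :: "('h \<Rightarrow> ('h \<times> 'h) list) \<Rightarrow> ('h \<Rightarrow> 'h) \<Rightarrow> ('h \<Rightarrow> 'a::{ring,monoid_mult}) \<Rightarrow> 'h \<Rightarrow> 'a" where
  "Epar cop S p h = sum2 (cop h) (\<lambda>a b. p a * p (S b))"

definition Etpar :: "('h \<Rightarrow> ('h \<times> 'h) list) \<Rightarrow> ('h \<Rightarrow> 'h) \<Rightarrow> ('h \<Rightarrow> 'a::{ring,monoid_mult}) \<Rightarrow> 'h \<Rightarrow> 'a" where
  "Etpar cop S p h = sum2 (cop h) (\<lambda>a b. p (S a) * p b)"

definition cocommutative :: "('k::field \<Rightarrow> 'h::ab_group_add \<Rightarrow> 'h) \<Rightarrow> ('h \<Rightarrow> ('h \<times> 'h) list) \<Rightarrow> bool" where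
  "cocommutative s cop \<longleftrightarrow> (\<forall>h. teq2 s (cop h) (map (\<lambda>(a,b). (b,a)) (cop h)))"

end

(*
  A tensor in H \<otimes> H is a formal list of
  pairs, and two lists are identified when every scalar-valued bilinear form agrees on them; since
  vectors are separated by linear functionals, each tensor identity among the axioms can be applied
  under an arbitrary bilinear map into any vector space, in particular under products in the algebra
  that receives the partial representation [-].

  From the axioms one first derives the calculus of the target and source maps
  eps_t h = h_1 S(h_2) = eps(1_1 h) 1_2 and eps_s h = S(h_1) h_2 = 1_1 eps(h 1_2): the identities
  h_1 \<otimes> eps_t(h_2) = 1_1 h \<otimes> 1_2 and eps_s(h_1) \<otimes> h_2 = 1_1 \<otimes> h 1_2, their variants with S,
  the commutation of eps_s(H) with eps_t(H), and the fact that S reverses both multiplication and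
  comultiplication.  Each item of the proposition is then obtained by expanding E and E~, applying one
  defining relation of H_par^w, and contracting h_1 S(h_2) or S(h_1) h_2 into eps_t or eps_s by
  these identities; for (n), cocommutativity lets the two tensor legs be swapped.
*)

theory Submission
  imports Defs
begin

section \<open>Formal tensors and multilinear maps\<close>

named_theorems linear_intros

lemma vector_space_field_mult [linear_intros]:
  "Vector_Spaces.vector_space ((*) :: 'k::field \<Rightarrow> 'k \<Rightarrow> 'k)"
  by unfold_locales (simp_all add: algebra_simps)

lemma linear_scaleD: "Vector_Spaces.linear s1 s2 g \<Longrightarrow> g (s1 c x) = s2 c (g x)"
  unfolding Vector_Spaces.linear_iff by blast

lemma linear_compose_fun:
  "Vector_Spaces.linear s1 s2 G \<Longrightarrow> Vector_Spaces.linear s2 s3 g \<Longrightarrow>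
   Vector_Spaces.linear s1 s3 (\<lambda>x. g (G x))"
  using Vector_Spaces.linear_compose[of s1 s2 G s3 g] by (simp add: o_def)

lemma linear_vector_space_codomain: "Vector_Spaces.linear s1 s2 g \<Longrightarrow> Vector_Spaces.vector_space s2"
  by (simp add: Vector_Spaces.linear_def)

lemma exists_linear_functional_nonzero:
  assumes "Vector_Spaces.vector_space sV" and "v \<noteq> 0"
  shows "\<exists>g. Vector_Spaces.linear sV (*) g \<and> g v \<noteq> 0"
proof -
  interpret vector_space sV by fact
  obtain B where "independent B" "UNIV \<subseteq> span B"
    using maximal_independent_subset[of UNIV] by blast
  then have B: "independent B" "span B = UNIV" by auto
  have "\<exists>b. representation B v b \<noteq> 0"
  proof (rule ccontr)
    assume "\<not> ?thesis"
    then have "{b. representation B v b \<noteq> 0} = {}" by auto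
    with sum_nonzero_representation_eq[OF B(1), of v] B(2) have "v = 0" by simp
    with \<open>v \<noteq> 0\<close> show False ..
  qed
  with linear_representation[OF B] show ?thesis by blast
qed

lemma sum2_cong: "(\<And>a b. F a b = G a b) \<Longrightarrow> sum2 t F = sum2 t G"
  by (simp add: sum2_def)

lemma sum2_append: "sum2 (t @ u) f = sum2 t f + sum2 u f"
  unfolding sum2_def by simp

lemma sum2_map: "sum2 (map (\<lambda>(a,b). (g a b, h a b)) t) f = sum2 t (\<lambda>a b. f (g a b) (h a b))"
  unfolding sum2_def by (induct t) (auto simp: split_def)

lemma sum2_swap: "sum2 t (\<lambda>a b. sum2 u (\<lambda>c d. F a b c d)) = sum2 u (\<lambda>c d. sum2 t (\<lambda>a b. F a b c d))"
  unfolding sum2_def by (induct t) (simp_all add: split_def sum_list_addf)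

lemma sum2_mult_left: "(c::'z::ring) * sum2 t F = sum2 t (\<lambda>a b. c * F a b)"
  unfolding sum2_def by (induct t) (auto simp: split_def distrib_left)

lemma sum2_mult_right: "sum2 t F * (c::'z::ring) = sum2 t (\<lambda>a b. F a b * c)"
  unfolding sum2_def by (induct t) (auto simp: split_def distrib_right)

lemma sum2_tmul2: "sum2 (tmul2 t u) f = sum2 t (\<lambda>a b. sum2 u (\<lambda>c d. f (a*c) (b*d)))"
  unfolding tmul2_def sum2_def by (induct t) (auto simp: split_def o_def)

lemma sum3_concat_map_right:
  "sum3 (concat (map (\<lambda>(a,b). map (\<lambda>(c,d). (a,c,d)) (g b)) t)) f = sum2 t (\<lambda>a b. sum2 (g b) (\<lambda>c d. f a c d))"
  unfolding sum3_def sum2_def by (induct t) (auto simp: split_def o_def)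

lemma sum3_concat_map_left:
  "sum3 (concat (map (\<lambda>(a,b). map (\<lambda>(c,d). (c,d,b)) (g a)) t)) f = sum2 t (\<lambda>a b. sum2 (g a) (\<lambda>c d. f c d b))"
  unfolding sum3_def sum2_def by (induct t) (auto simp: split_def o_def)

lemma sum3_concat_map_middle_left:
  "sum3 (concat (map (\<lambda>(c,d). map (\<lambda>(a,b). (a, c * b, d)) u) t)) f = sum2 t (\<lambda>c d. sum2 u (\<lambda>a b. f a (c*b) d))"
  unfolding sum3_def sum2_def by (induct t) (auto simp: split_def o_def)

lemma sum3_concat_map_middle_right:
  "sum3 (concat (map (\<lambda>(a,b). map (\<lambda>(c,d). (a, b * c, d)) u) t)) f = sum2 t (\<lambda>a b. sum2 u (\<lambda>c d. f a (b*c) d))"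
  unfolding sum3_def sum2_def by (induct t) (auto simp: split_def o_def)

lemma linear_sum2: "Vector_Spaces.linear s1 s2 g \<Longrightarrow> g (sum2 t f) = sum2 t (\<lambda>a b. g (f a b))"
proof -
  assume "Vector_Spaces.linear s1 s2 g"
  then interpret linear s1 s2 g .
  show ?thesis by (induct t) (auto simp: sum2_def add)
qed

lemma linear_sum3: "Vector_Spaces.linear s1 s2 g \<Longrightarrow> g (sum3 t f) = sum3 t (\<lambda>a b c. g (f a b c))"
proof -
  assume "Vector_Spaces.linear s1 s2 g"
  then interpret linear s1 s2 g .
  show ?thesis by (induct t) (auto simp: sum3_def add)
qed

lemma scale_sum2: "Vector_Spaces.vector_space sV \<Longrightarrow> sV c (sum2 t G) = sum2 t (\<lambda>a b. sV c (G a b))"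
  by (rule linear_sum2[OF vector_space.linear_scale_self])

lemma vector_space_scale_scale: "Vector_Spaces.vector_space sV \<Longrightarrow> sV c (sV d x) = sV (c * d) x"
  by (simp add: module_iff_vector_space[symmetric] module.scale_scale)

lemma scale_sum2_left:
  assumes "Vector_Spaces.vector_space sV"
  shows "sV (sum2 t F) v = sum2 t (\<lambda>a b. sV (F a b) v)"
proof -
  interpret vector_space sV by fact
  show ?thesis unfolding sum2_def by (induct t) (auto simp: split_def scale_left_distrib)
qed

lemma eq_if_linear_functionals_eq:
  assumes vs: "Vector_Spaces.vector_space sV"
    and eq: "\<And>g. Vector_Spaces.linear sV (*) g \<Longrightarrow> g x = g y"
  shows "x = y"
proof (rule ccontr)
  interpret vector_space sV by fact
  assume "x \<noteq> y"
  then obtain g where g: "Vector_Spaces.linear sV (*) g" "g (x - y) \<noteq> 0"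
    using exists_linear_functional_nonzero[OF vs, of "x - y"] by auto
  interpret linear sV "(*)" g by fact
  from g(2) eq[OF g(1)] show False by (simp add: diff)
qed

definition bilinear_map ::
  "('k::field \<Rightarrow> 'h::ab_group_add \<Rightarrow> 'h) \<Rightarrow> ('k \<Rightarrow> 'v::ab_group_add \<Rightarrow> 'v) \<Rightarrow> ('h \<Rightarrow> 'h \<Rightarrow> 'v) \<Rightarrow> bool" where
  "bilinear_map s sV f \<longleftrightarrow>
     (\<forall>b. Vector_Spaces.linear s sV (\<lambda>a. f a b)) \<and> (\<forall>a. Vector_Spaces.linear s sV (\<lambda>b. f a b))"

definition trilinear_map ::
  "('k::field \<Rightarrow> 'h::ab_group_add \<Rightarrow> 'h) \<Rightarrow> ('k \<Rightarrow> 'v::ab_group_add \<Rightarrow> 'v) \<Rightarrow> ('h \<Rightarrow> 'h \<Rightarrow> 'h \<Rightarrow> 'v) \<Rightarrow> bool" where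
  "trilinear_map s sV f \<longleftrightarrow>
     (\<forall>b c. Vector_Spaces.linear s sV (\<lambda>a. f a b c)) \<and> (\<forall>a c. Vector_Spaces.linear s sV (\<lambda>b. f a b c))
     \<and> (\<forall>a b. Vector_Spaces.linear s sV (\<lambda>c. f a b c))"

lemma bilinear_mapI [linear_intros]:
  "(\<And>b. Vector_Spaces.linear s sV (\<lambda>a. f a b)) \<Longrightarrow> (\<And>a. Vector_Spaces.linear s sV (\<lambda>b. f a b))
   \<Longrightarrow> bilinear_map s sV f"
  by (simp add: bilinear_map_def)

lemma trilinear_mapI [linear_intros]:
  "(\<And>b c. Vector_Spaces.linear s sV (\<lambda>a. f a b c)) \<Longrightarrow> (\<And>a c. Vector_Spaces.linear s sV (\<lambda>b. f a b c))
   \<Longrightarrow> (\<And>a b. Vector_Spaces.linear s sV (\<lambda>c. f a b c)) \<Longrightarrow> trilinear_map s sV f"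
  by (simp add: trilinear_map_def)

lemma bilinear_map_vector_space: "bilinear_map s sV f \<Longrightarrow> Vector_Spaces.vector_space sV"
  unfolding bilinear_map_def using linear_vector_space_codomain by blast

lemma trilinear_map_vector_space: "trilinear_map s sV f \<Longrightarrow> Vector_Spaces.vector_space sV"
  unfolding trilinear_map_def using linear_vector_space_codomain by blast

lemma bilinear_map_sum2_left: "bilinear_map s sV f \<Longrightarrow> f (sum2 t G) b = sum2 t (\<lambda>c d. f (G c d) b)"
  unfolding bilinear_map_def using linear_sum2[of s sV "\<lambda>a. f a b"] by blast

lemma bilinear_map_sum2_right: "bilinear_map s sV f \<Longrightarrow> f a (sum2 t G) = sum2 t (\<lambda>c d. f a (G c d))"
  unfolding bilinear_map_def using linear_sum2[of s sV "\<lambda>b. f a b"] by blast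

lemma bilinear_map_scale_left: "bilinear_map s sV f \<Longrightarrow> f (s c x) b = sV c (f x b)"
  unfolding bilinear_map_def using linear_scaleD[of s sV "\<lambda>a. f a b"] by blast

lemma bilinear_map_scale_right: "bilinear_map s sV f \<Longrightarrow> f a (s c x) = sV c (f a x)"
  unfolding bilinear_map_def using linear_scaleD[of s sV "\<lambda>b. f a b"] by blast

text \<open>Equality of formal tensors is defined by testing against scalar-valued forms only; separating
  vectors by linear functionals extends it to forms with values in any vector space.\<close>

lemma teq2_sum2_eq:
  assumes t: "teq2 s t u" and f: "bilinear_map s sV f"
  shows "sum2 t f = sum2 u f"
proof (rule eq_if_linear_functionals_eq[OF bilinear_map_vector_space[OF f]])
  fix g assume g: "Vector_Spaces.linear sV (*) g"
  have "bilin s (\<lambda>a b. g (f a b))"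
    using f g by (auto simp: bilin_def bilinear_map_def intro: linear_compose_fun[of _ sV _ _ g])
  with t show "g (sum2 t f) = g (sum2 u f)"
    by (simp add: teq2_def linear_sum2[OF g])
qed

lemma teq3_sum3_eq:
  assumes t: "teq3 s t u" and f: "trilinear_map s sV f"
  shows "sum3 t f = sum3 u f"
proof (rule eq_if_linear_functionals_eq[OF trilinear_map_vector_space[OF f]])
  fix g assume g: "Vector_Spaces.linear sV (*) g"
  have "trilin s (\<lambda>a b c. g (f a b c))"
    using f g by (auto simp: trilin_def trilinear_map_def intro: linear_compose_fun[of _ sV _ _ g])
  with t show "g (sum3 t f) = g (sum3 u f)"
    by (simp add: teq3_def linear_sum3[OF g])
qed

lemma vector_space_pair_linear: "Vector_Spaces.linear s1 s2 f \<Longrightarrow> vector_space_pair s1 s2"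
  by (simp add: Vector_Spaces.linear_def vector_space_pair_def)

lemma linear_add_fun [linear_intros]:
  "Vector_Spaces.linear s sV F \<Longrightarrow> Vector_Spaces.linear s sV G \<Longrightarrow> Vector_Spaces.linear s sV (\<lambda>x. F x + G x)"
  by (rule vector_space_pair.linear_compose_add[OF vector_space_pair_linear])

lemma linear_scale_fun [linear_intros]:
  "Vector_Spaces.linear s sV F \<Longrightarrow> Vector_Spaces.linear s sV (\<lambda>x. sV c (F x))"
  by (rule vector_space_pair.linear_compose_scale_right[OF vector_space_pair_linear])

lemma linear_scale_by_fun [linear_intros]:
  "Vector_Spaces.linear s (*) \<phi> \<Longrightarrow> Vector_Spaces.vector_space sV \<Longrightarrow> Vector_Spaces.linear s sV (\<lambda>x. sV (\<phi> x) v)"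
  by (rule vector_space_pair.linear_compose_scale)
    (simp_all add: vector_space_pair_def Vector_Spaces.linear_def)

lemma linear_mult_left_field [linear_intros]:
  "Vector_Spaces.linear s (*) \<phi> \<Longrightarrow> Vector_Spaces.linear s (*) (\<lambda>x. c * \<phi> x)"
  unfolding Vector_Spaces.linear_iff by (auto simp: algebra_simps)

lemma linear_mult_right_field [linear_intros]:
  "Vector_Spaces.linear s (*) \<phi> \<Longrightarrow> Vector_Spaces.linear s (*) (\<lambda>x. \<phi> x * c)"
  unfolding Vector_Spaces.linear_iff by (auto simp: algebra_simps)

lemma k_algebra_scale_mult_left: "k_algebra sA \<Longrightarrow> sA c (x * y) = sA c x * y"
  unfolding k_algebra_def by blast

lemma k_algebra_scale_mult_right: "k_algebra sA \<Longrightarrow> sA c (x * y) = x * sA c y"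
  unfolding k_algebra_def by blast

lemma linear_mult_left:
  assumes A: "k_algebra sA" and F: "Vector_Spaces.linear s sA F"
  shows "Vector_Spaces.linear s sA (\<lambda>x. c * F x)"
proof -
  interpret F: linear s sA F by fact
  show ?thesis unfolding Vector_Spaces.linear_iff
    by (simp add: F.add F.scale k_algebra_scale_mult_right[OF A] distrib_left
        F.vs1.vector_space_axioms F.vs2.vector_space_axioms)
qed

lemma linear_mult_right:
  assumes A: "k_algebra sA" and F: "Vector_Spaces.linear s sA F"
  shows "Vector_Spaces.linear s sA (\<lambda>x. F x * c)"
proof -
  interpret F: linear s sA F by fact
  show ?thesis unfolding Vector_Spaces.linear_iff
    by (simp add: F.add F.scale k_algebra_scale_mult_left[OF A] distrib_right
        F.vs1.vector_space_axioms F.vs2.vector_space_axioms)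
qed

lemma linear_sum2_fun [linear_intros]:
  assumes "Vector_Spaces.vector_space s" "Vector_Spaces.vector_space sV"
    and "\<And>a b. Vector_Spaces.linear s sV (\<lambda>x. F x a b)"
  shows "Vector_Spaces.linear s sV (\<lambda>x. sum2 t (\<lambda>a b. F x a b))"
proof (induct t)
  case Nil
  show ?case
    using vector_space_pair.linear_zero[of s sV] assms(1,2)
      by (simp add: sum2_def vector_space_pair_def)
next
  case (Cons ab t)
  then have "Vector_Spaces.linear s sV (\<lambda>x. F x (fst ab) (snd ab) + sum2 t (\<lambda>a b. F x a b))"
    using assms(3) by (intro linear_add_fun)
  then show ?case by (simp add: sum2_def split_def)
qed

lemma bilinear_map_compose_left:
  "bilinear_map s sV f \<Longrightarrow> Vector_Spaces.linear s s G \<Longrightarrow> Vector_Spaces.linear s sV (\<lambda>x. f (G x) b)"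
  unfolding bilinear_map_def using linear_compose_fun[where G = G and g = "\<lambda>a. f a b"] by auto

lemma bilinear_map_compose_right:
  "bilinear_map s sV f \<Longrightarrow> Vector_Spaces.linear s s G \<Longrightarrow> Vector_Spaces.linear s sV (\<lambda>x. f a (G x))"
  unfolding bilinear_map_def by (blast intro: linear_compose_fun)

section \<open>Weak Hopf algebras in Sweedler notation\<close>

locale weak_hopf =
  fixes s :: "'k::field \<Rightarrow> 'h::{ring,monoid_mult} \<Rightarrow> 'h" and cop :: "'h \<Rightarrow> ('h \<times> 'h) list"
    and eps :: "'h \<Rightarrow> 'k" and S :: "'h \<Rightarrow> 'h"
  assumes wha: "weak_hopf_algebra s cop eps S"
begin

text \<open>\<open>\<Delta> h f\<close> is the Sweedler sum \<open>f h\<^sub>1 h\<^sub>2\<close>.\<close>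

abbreviation \<Delta> :: "'h \<Rightarrow> ('h \<Rightarrow> 'h \<Rightarrow> 'v::comm_monoid_add) \<Rightarrow> 'v" where
  "\<Delta> h f \<equiv> sum2 (cop h) f"

lemmas weak_hopf_axioms_unfolded = wha[unfolded weak_hopf_algebra_def]

lemma k_algebra_H: "k_algebra s"
  using weak_hopf_axioms_unfolded by blast

lemma vector_space_H [linear_intros]: "Vector_Spaces.vector_space s"
  using k_algebra_H by (simp add: k_algebra_def)

lemma comult_add: "teq2 s (cop (x + y)) (cop x @ cop y)"
  using weak_hopf_axioms_unfolded by blast

lemma comult_scale: "teq2 s (cop (s c x)) (map (\<lambda>(a,b). (s c a, b)) (cop x))"
  using weak_hopf_axioms_unfolded by blast

lemma linear_counit: "Vector_Spaces.linear s (*) eps"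
  using weak_hopf_axioms_unfolded by blast

lemma linear_antipode: "Vector_Spaces.linear s s S"
  using weak_hopf_axioms_unfolded by blast

lemma coassoc: "teq3 s (cop2L cop h) (cop2 cop h)"
  using weak_hopf_axioms_unfolded by blast

lemma counit_left: "\<Delta> h (\<lambda>a b. s (eps a) b) = h"
  using weak_hopf_axioms_unfolded by blast

lemma counit_right: "\<Delta> h (\<lambda>a b. s (eps b) a) = h"
  using weak_hopf_axioms_unfolded by blast

lemma comult_mult: "teq2 s (cop (k * h)) (tmul2 (cop k) (cop h))"
  using weak_hopf_axioms_unfolded by blast

lemma counit_weak_mult1: "\<Delta> h (\<lambda>a b. eps (k * a) * eps (b * g)) = eps (k * h * g)"
  using weak_hopf_axioms_unfolded by blast

lemma counit_weak_mult2: "\<Delta> h (\<lambda>a b. eps (k * b) * eps (a * g)) = eps (k * h * g)"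
  using weak_hopf_axioms_unfolded by blast

lemma unit_weak_comult1:
  "teq3 s (concat (map (\<lambda>(c,d). map (\<lambda>(a,b). (a, c * b, d)) (cop 1)) (cop 1))) (cop2 cop 1)"
  using weak_hopf_axioms_unfolded by blast

lemma unit_weak_comult2:
  "teq3 s (concat (map (\<lambda>(a,b). map (\<lambda>(c,d). (a, b * c, d)) (cop 1)) (cop 1))) (cop2 cop 1)"
  using weak_hopf_axioms_unfolded by blast

lemma sum3_cop2: "sum3 (cop2 cop h) f = \<Delta> h (\<lambda>a b. \<Delta> b (\<lambda>c d. f a c d))"
  unfolding cop2_def by (rule sum3_concat_map_right)

lemma sum3_cop2L: "sum3 (cop2L cop h) f = \<Delta> h (\<lambda>a b. \<Delta> a (\<lambda>c d. f c d b))"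
  unfolding cop2L_def by (rule sum3_concat_map_left)

lemma antipode_S_id_S: "S h = \<Delta> h (\<lambda>a b. \<Delta> b (\<lambda>c d. S a * c * S d))"
proof -
  have "S h = sum3 (cop2 cop h) (\<lambda>a b c. S a * b * S c)"
    using weak_hopf_axioms_unfolded by blast
  then show ?thesis by (simp only: sum3_cop2)
qed

lemma linear_id_H [linear_intros]: "Vector_Spaces.linear s s (\<lambda>x. x)"
  by (rule vector_space.linear_ident[OF vector_space_H])

lemma linear_antipode_comp [linear_intros]:
  "Vector_Spaces.linear s s G \<Longrightarrow> Vector_Spaces.linear s s (\<lambda>x. S (G x))"
  by (rule linear_compose_fun[OF _ linear_antipode])

lemma linear_counit_comp [linear_intros]:
  "Vector_Spaces.linear s s G \<Longrightarrow> Vector_Spaces.linear s (*) (\<lambda>x. eps (G x))"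
  by (rule linear_compose_fun[OF _ linear_counit])

lemma linear_mult_left_H [linear_intros]:
  "Vector_Spaces.linear s s G \<Longrightarrow> Vector_Spaces.linear s s (\<lambda>x. c * G x)"
  by (rule linear_mult_left[OF k_algebra_H])

lemma linear_mult_right_H [linear_intros]:
  "Vector_Spaces.linear s s G \<Longrightarrow> Vector_Spaces.linear s s (\<lambda>x. G x * c)"
  by (rule linear_mult_right[OF k_algebra_H])

lemma scale_mult_left_H: "s c (x * y) = s c x * y"
  by (rule k_algebra_scale_mult_left[OF k_algebra_H])

lemma scale_mult_right_H: "s c (x * y) = x * s c y"
  by (rule k_algebra_scale_mult_right[OF k_algebra_H])

lemma counit_sum2: "eps (sum2 t G) = sum2 t (\<lambda>c d. eps (G c d))"
  by (rule linear_sum2[OF linear_counit])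

lemma counit_scale: "eps (s c x) = c * eps x"
  using linear_scaleD[OF linear_counit] by simp

lemma antipode_scale: "S (s c x) = s c (S x)"
  using linear_scaleD[OF linear_antipode] by simp

lemma sweedler_add: "bilinear_map s sV f \<Longrightarrow> \<Delta> (x + y) f = \<Delta> x f + \<Delta> y f"
  using teq2_sum2_eq[OF comult_add] by (simp add: sum2_append)

lemma sweedler_scale:
  assumes f: "bilinear_map s sV f"
  shows "\<Delta> (s c x) f = sV c (\<Delta> x f)"
proof -
  interpret V: vector_space sV using bilinear_map_vector_space[OF f] .
  have "\<Delta> (s c x) f = \<Delta> x (\<lambda>a b. f (s c a) b)"
    using teq2_sum2_eq[OF comult_scale f] by (simp add: sum2_map)
  also have "\<dots> = \<Delta> x (\<lambda>a b. sV c (f a b))"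
    by (simp add: bilinear_map_scale_left[OF f])
  also have "\<dots> = sV c (\<Delta> x f)"
    by (simp add: scale_sum2[OF V.vector_space_axioms])
  finally show ?thesis .
qed

lemma linear_sweedler [linear_intros]:
  assumes G: "Vector_Spaces.linear s s G" and f: "bilinear_map s sV f"
  shows "Vector_Spaces.linear s sV (\<lambda>x. \<Delta> (G x) f)"
proof -
  interpret G: linear s s G by fact
  show ?thesis unfolding Vector_Spaces.linear_iff
    using bilinear_map_vector_space[OF f] vector_space_H
    by (simp add: G.add G.scale sweedler_add[OF f] sweedler_scale[OF f])
qed

lemma sweedler_sum2: "bilinear_map s sV f \<Longrightarrow> \<Delta> (sum2 t G) f = sum2 t (\<lambda>a b. \<Delta> (G a b) f)"
  by (rule linear_sum2[OF linear_sweedler[OF linear_id_H]])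

lemma coassoc_sweedler:
  "trilinear_map s sV f \<Longrightarrow>
     \<Delta> h (\<lambda>a b. \<Delta> a (\<lambda>c d. f c d b)) = \<Delta> h (\<lambda>a b. \<Delta> b (\<lambda>c d. f a c d))"
  using teq3_sum3_eq[OF coassoc] by (simp only: sum3_cop2 sum3_cop2L)

lemma comult_mult_sweedler:
  "bilinear_map s sV f \<Longrightarrow> \<Delta> (k * h) f = \<Delta> k (\<lambda>a b. \<Delta> h (\<lambda>c d. f (a*c) (b*d)))"
  using teq2_sum2_eq[OF comult_mult] by (simp add: sum2_tmul2)

lemma unit_weak_comult1_sweedler:
  "trilinear_map s sV f \<Longrightarrow>
     \<Delta> 1 (\<lambda>c d. \<Delta> 1 (\<lambda>a b. f a (c*b) d)) = \<Delta> 1 (\<lambda>a b. \<Delta> b (\<lambda>c d. f a c d))"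
  using teq3_sum3_eq[OF unit_weak_comult1] by (simp only: sum3_cop2 sum3_concat_map_middle_left)

lemma unit_weak_comult2_sweedler:
  "trilinear_map s sV f \<Longrightarrow>
     \<Delta> 1 (\<lambda>a b. \<Delta> 1 (\<lambda>c d. f a (b*c) d)) = \<Delta> 1 (\<lambda>a b. \<Delta> b (\<lambda>c d. f a c d))"
  using teq3_sum3_eq[OF unit_weak_comult2] by (simp only: sum3_cop2 sum3_concat_map_middle_right)

lemma counit_left_sweedler:
  assumes g: "Vector_Spaces.linear s sV g"
  shows "\<Delta> h (\<lambda>a b. sV (eps a) (g b)) = g h"
  using linear_sum2[OF g, of "cop h" "\<lambda>a b. s (eps a) b"]
  by (simp add: counit_left linear_scaleD[OF g])

lemma counit_right_sweedler:
  assumes g: "Vector_Spaces.linear s sV g"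
  shows "\<Delta> h (\<lambda>a b. sV (eps b) (g a)) = g h"
  using linear_sum2[OF g, of "cop h" "\<lambda>a b. s (eps b) a"]
  by (simp add: counit_right linear_scaleD[OF g])

lemma sweedler_unit_left:
  "bilinear_map s sV f \<Longrightarrow> \<Delta> h f = \<Delta> 1 (\<lambda>a b. \<Delta> h (\<lambda>c d. f (a*c) (b*d)))"
  using comult_mult_sweedler[of sV f 1 h] by simp

lemma sweedler_unit_right:
  "bilinear_map s sV f \<Longrightarrow> \<Delta> h f = \<Delta> h (\<lambda>a b. \<Delta> 1 (\<lambda>c d. f (a*c) (b*d)))"
  using comult_mult_sweedler[of sV f h 1] by simp

end

section \<open>Source and target maps\<close>

context weak_hopf
begin

definition eps_t :: "'h \<Rightarrow> 'h" where
  "eps_t y = \<Delta> 1 (\<lambda>a b. s (eps (a * y)) b)"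

definition eps_s :: "'h \<Rightarrow> 'h" where
  "eps_s y = \<Delta> 1 (\<lambda>a b. s (eps (y * b)) a)"

lemma eps_t_sweedler: "eps_t h = \<Delta> h (\<lambda>a b. a * S b)"
proof -
  have "\<Delta> h (\<lambda>a b. a * S b) = \<Delta> 1 (\<lambda>a b. s (eps (a * h)) b)"
    using weak_hopf_axioms_unfolded by blast
  then show ?thesis by (simp add: eps_t_def)
qed

lemma eps_s_sweedler: "eps_s h = \<Delta> h (\<lambda>a b. S a * b)"
proof -
  have "\<Delta> h (\<lambda>a b. S a * b) = \<Delta> 1 (\<lambda>a b. s (eps (h * b)) a)"
    using weak_hopf_axioms_unfolded by blast
  then show ?thesis by (simp add: eps_s_def)
qed

lemma linear_eps_t_comp [linear_intros]:
  "Vector_Spaces.linear s s G \<Longrightarrow> Vector_Spaces.linear s s (\<lambda>x. eps_t (G x))"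
  unfolding eps_t_def by (intro linear_intros)

lemma linear_eps_s_comp [linear_intros]:
  "Vector_Spaces.linear s s G \<Longrightarrow> Vector_Spaces.linear s s (\<lambda>x. eps_s (G x))"
  unfolding eps_s_def by (intro linear_intros)

lemma antipode_eq_S_eps_t: "S h = \<Delta> h (\<lambda>a b. S a * eps_t b)"
  by (simp add: antipode_S_id_S[of h] eps_t_sweedler sum2_mult_left mult.assoc)

lemma antipode_eq_eps_s_S: "S h = \<Delta> h (\<lambda>a b. eps_s a * S b)"
proof -
  have "S h = \<Delta> h (\<lambda>a b. \<Delta> b (\<lambda>c d. S a * c * S d))" by (rule antipode_S_id_S)
  also have "\<dots> = \<Delta> h (\<lambda>a b. \<Delta> a (\<lambda>c d. S c * d * S b))"
    by (rule coassoc_sweedler[where sV = s, symmetric]) (intro linear_intros)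
  also have "\<dots> = \<Delta> h (\<lambda>a b. eps_s a * S b)"
    by (simp add: eps_s_sweedler sum2_mult_right)
  finally show ?thesis .
qed

lemma sweedler_eps_t_right:
  assumes f: "bilinear_map s sV f"
  shows "\<Delta> x (\<lambda>a b. f a (eps_t b)) = \<Delta> 1 (\<lambda>a b. f (a*x) b)"
proof -
  note lin = bilinear_map_compose_left[OF f] bilinear_map_compose_right[OF f]
    bilinear_map_vector_space[OF f]
  have "\<Delta> 1 (\<lambda>a b. f (a*x) b) = \<Delta> 1 (\<lambda>a b. \<Delta> (a*x) (\<lambda>c d. sV (eps d) (f c b)))"
    by (rule sum2_cong, rule counit_right_sweedler[where sV = sV, symmetric])
      (intro linear_intros lin)
  also have "\<dots> = \<Delta> 1 (\<lambda>a b. \<Delta> a (\<lambda>a' b'. \<Delta> x (\<lambda>c d. sV (eps (b'*d)) (f (a'*c) b))))"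
    by (rule sum2_cong, rule comult_mult_sweedler[where sV = sV]) (intro linear_intros lin)
  also have "\<dots> = \<Delta> 1 (\<lambda>a b. \<Delta> b (\<lambda>c d. \<Delta> x (\<lambda>u v. sV (eps (c*v)) (f (a*u) d))))"
    by (rule coassoc_sweedler[where sV = sV]) (intro linear_intros lin)
  also have "\<dots> = \<Delta> 1 (\<lambda>c d. \<Delta> 1 (\<lambda>a b. \<Delta> x (\<lambda>u v. sV (eps (c*b*v)) (f (a*u) d))))"
    by (rule unit_weak_comult1_sweedler[where sV = sV, symmetric]) (intro linear_intros lin)
  also have "\<dots> = \<Delta> 1 (\<lambda>c d. \<Delta> x (\<lambda>u v. sV (eps (c*v)) (f u d)))"
    by (rule sum2_cong, subst sweedler_unit_left[where sV = sV and h = x],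
      (intro linear_intros lin), simp add: mult.assoc)
  also have "\<dots> = \<Delta> x (\<lambda>u v. \<Delta> 1 (\<lambda>c d. sV (eps (c*v)) (f u d)))"
    by (rule sum2_swap)
  also have "\<dots> = \<Delta> x (\<lambda>u v. f u (eps_t v))"
    unfolding eps_t_def
    by (rule sum2_cong) (simp add: bilinear_map_sum2_right[OF f] bilinear_map_scale_right[OF f])
  finally show ?thesis by simp
qed

lemma sweedler_eps_s_left:
  assumes f: "bilinear_map s sV f"
  shows "\<Delta> x (\<lambda>a b. f (eps_s a) b) = \<Delta> 1 (\<lambda>a b. f a (x*b))"
proof -
  note lin = bilinear_map_compose_left[OF f] bilinear_map_compose_right[OF f]
    bilinear_map_vector_space[OF f]
  have "\<Delta> 1 (\<lambda>a b. f a (x*b)) = \<Delta> 1 (\<lambda>a b. \<Delta> (x*b) (\<lambda>c d. sV (eps c) (f a d)))"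
    by (rule sum2_cong, rule counit_left_sweedler[where sV = sV, symmetric])
      (intro linear_intros lin)
  also have "\<dots> = \<Delta> 1 (\<lambda>a b. \<Delta> x (\<lambda>u v. \<Delta> b (\<lambda>c d. sV (eps (u*c)) (f a (v*d)))))"
    by (rule sum2_cong, rule comult_mult_sweedler[where sV = sV]) (intro linear_intros lin)
  also have "\<dots> = \<Delta> x (\<lambda>u v. \<Delta> 1 (\<lambda>a b. \<Delta> b (\<lambda>c d. sV (eps (u*c)) (f a (v*d)))))"
    by (rule sum2_swap)
  also have "\<dots> = \<Delta> x (\<lambda>u v. \<Delta> 1 (\<lambda>c d. \<Delta> 1 (\<lambda>a b. sV (eps (u*(c*b))) (f a (v*d)))))"
    by (rule sum2_cong, rule unit_weak_comult1_sweedler[where sV = sV, symmetric])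
      (intro linear_intros lin)
  also have "\<dots> = \<Delta> x (\<lambda>u v. \<Delta> 1 (\<lambda>a b. sV (eps (u*b)) (f a v)))"
    by (subst sweedler_unit_right[where sV = sV and f = "\<lambda>u v. \<Delta> 1 (\<lambda>a b. sV (eps (u*b)) (f a v))"])
      (intro linear_intros lin, simp add: mult.assoc)
  also have "\<dots> = \<Delta> x (\<lambda>u v. f (eps_s u) v)"
    unfolding eps_s_def by (simp add: bilinear_map_sum2_left[OF f] bilinear_map_scale_left[OF f])
  finally show ?thesis by simp
qed

lemma comult_eps_t_unit_mult:
  assumes f: "bilinear_map s sV f"
  shows "\<Delta> (eps_t y) f = \<Delta> 1 (\<lambda>a b. f (a * eps_t y) b)"
proof -
  have vs: "Vector_Spaces.vector_space sV" by (rule bilinear_map_vector_space[OF f])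
  note lin = bilinear_map_compose_left[OF f] bilinear_map_compose_right[OF f] vs
  have "\<Delta> (eps_t y) f = \<Delta> 1 (\<lambda>a b. \<Delta> b (\<lambda>c d. sV (eps (a*y)) (f c d)))"
    unfolding eps_t_def by (simp add: sweedler_sum2[OF f] sweedler_scale[OF f] scale_sum2[OF vs])
  also have "\<dots> = \<Delta> 1 (\<lambda>c d. \<Delta> 1 (\<lambda>a b. sV (eps (a*y)) (f (c*b) d)))"
    by (rule unit_weak_comult1_sweedler[where sV = sV, symmetric]) (intro linear_intros lin)
  also have "\<dots> = \<Delta> 1 (\<lambda>a b. f (a * eps_t y) b)"
    unfolding eps_t_def
      by (simp add: bilinear_map_sum2_left[OF f] bilinear_map_scale_left[OF f] sum2_mult_left
        scale_mult_right_H[symmetric])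
  finally show ?thesis .
qed

lemma comult_eps_t_mult_unit:
  assumes f: "bilinear_map s sV f"
  shows "\<Delta> (eps_t y) f = \<Delta> 1 (\<lambda>a b. f (eps_t y * a) b)"
proof -
  have vs: "Vector_Spaces.vector_space sV" by (rule bilinear_map_vector_space[OF f])
  note lin = bilinear_map_compose_left[OF f] bilinear_map_compose_right[OF f] vs
  have "\<Delta> (eps_t y) f = \<Delta> 1 (\<lambda>a b. \<Delta> b (\<lambda>c d. sV (eps (a*y)) (f c d)))"
    unfolding eps_t_def by (simp add: sweedler_sum2[OF f] sweedler_scale[OF f] scale_sum2[OF vs])
  also have "\<dots> = \<Delta> 1 (\<lambda>a b. \<Delta> 1 (\<lambda>c d. sV (eps (a*y)) (f (b*c) d)))"
    by (rule unit_weak_comult2_sweedler[where sV = sV, symmetric]) (intro linear_intros lin)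
  also have "\<dots> = \<Delta> 1 (\<lambda>c d. \<Delta> 1 (\<lambda>a b. sV (eps (a*y)) (f (b*c) d)))"
    by (rule sum2_swap)
  also have "\<dots> = \<Delta> 1 (\<lambda>a b. f (eps_t y * a) b)"
    unfolding eps_t_def
      by (simp add: bilinear_map_sum2_left[OF f] bilinear_map_scale_left[OF f] sum2_mult_right
        scale_mult_left_H[symmetric])
  finally show ?thesis .
qed

lemma comult_eps_s_mult_unit:
  assumes f: "bilinear_map s sV f"
  shows "\<Delta> (eps_s y) f = \<Delta> 1 (\<lambda>a b. f a (eps_s y * b))"
proof -
  have vs: "Vector_Spaces.vector_space sV" by (rule bilinear_map_vector_space[OF f])
  note lin = bilinear_map_compose_left[OF f] bilinear_map_compose_right[OF f] vs
  have "\<Delta> (eps_s y) f = \<Delta> 1 (\<lambda>a b. \<Delta> a (\<lambda>c d. sV (eps (y*b)) (f c d)))"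
    unfolding eps_s_def by (simp add: sweedler_sum2[OF f] sweedler_scale[OF f] scale_sum2[OF vs])
  also have "\<dots> = \<Delta> 1 (\<lambda>a b. \<Delta> b (\<lambda>c d. sV (eps (y*d)) (f a c)))"
    by (rule coassoc_sweedler[where sV = sV]) (intro linear_intros lin)
  also have "\<dots> = \<Delta> 1 (\<lambda>c d. \<Delta> 1 (\<lambda>a b. sV (eps (y*d)) (f a (c*b))))"
    by (rule unit_weak_comult1_sweedler[where sV = sV, symmetric]) (intro linear_intros lin)
  also have "\<dots> = \<Delta> 1 (\<lambda>a b. \<Delta> 1 (\<lambda>c d. sV (eps (y*d)) (f a (c*b))))"
    by (rule sum2_swap)
  also have "\<dots> = \<Delta> 1 (\<lambda>a b. f a (eps_s y * b))"
    unfolding eps_s_def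
      by (simp add: bilinear_map_sum2_right[OF f] bilinear_map_scale_right[OF f] sum2_mult_right
        scale_mult_left_H[symmetric])
  finally show ?thesis .
qed

lemma comult_eps_s_unit_mult:
  assumes f: "bilinear_map s sV f"
  shows "\<Delta> (eps_s y) f = \<Delta> 1 (\<lambda>a b. f a (b * eps_s y))"
proof -
  have vs: "Vector_Spaces.vector_space sV" by (rule bilinear_map_vector_space[OF f])
  note lin = bilinear_map_compose_left[OF f] bilinear_map_compose_right[OF f] vs
  have "\<Delta> (eps_s y) f = \<Delta> 1 (\<lambda>a b. \<Delta> a (\<lambda>c d. sV (eps (y*b)) (f c d)))"
    unfolding eps_s_def by (simp add: sweedler_sum2[OF f] sweedler_scale[OF f] scale_sum2[OF vs])
  also have "\<dots> = \<Delta> 1 (\<lambda>a b. \<Delta> b (\<lambda>c d. sV (eps (y*d)) (f a c)))"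
    by (rule coassoc_sweedler[where sV = sV]) (intro linear_intros lin)
  also have "\<dots> = \<Delta> 1 (\<lambda>a b. \<Delta> 1 (\<lambda>c d. sV (eps (y*d)) (f a (b*c))))"
    by (rule unit_weak_comult2_sweedler[where sV = sV, symmetric]) (intro linear_intros lin)
  also have "\<dots> = \<Delta> 1 (\<lambda>a b. f a (b * eps_s y))"
    unfolding eps_s_def
      by (simp add: bilinear_map_sum2_right[OF f] bilinear_map_scale_right[OF f] sum2_mult_left
        scale_mult_right_H[symmetric])
  finally show ?thesis .
qed

lemma eps_t_mult_eps_t: "eps_t (x * eps_t y) = eps_t (x * y)"
proof -
  have "eps (a * (x * eps_t y)) = eps (a * (x * y))" for a
  proof -
    have "eps (a * (x * eps_t y)) = \<Delta> 1 (\<lambda>c d. eps (a * x * d) * eps (c * y))"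
      unfolding eps_t_def
      by (simp add: sum2_mult_left scale_mult_right_H[symmetric] counit_sum2 counit_scale
          mult.assoc mult.commute)
    also have "\<dots> = eps (a * x * 1 * y)" by (rule counit_weak_mult2)
    finally show ?thesis by (simp add: mult.assoc)
  qed
  then show ?thesis unfolding eps_t_def[of "x * eps_t y"] eps_t_def[of "x*y"] by simp
qed

lemma eps_s_eps_s_mult: "eps_s (eps_s x * y) = eps_s (x * y)"
proof -
  have "eps (eps_s x * y * b) = eps (x * y * b)" for b
  proof -
    have "eps (eps_s x * y * b) = \<Delta> 1 (\<lambda>c d. eps (x * d) * eps (c * (y * b)))"
      unfolding eps_s_def
      by (simp add: sum2_mult_right scale_mult_left_H[symmetric] counit_sum2 counit_scale
          mult.assoc mult.commute)
    also have "\<dots> = eps (x * 1 * (y * b))" by (rule counit_weak_mult2)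
    finally show ?thesis by (simp add: mult.assoc)
  qed
  then show ?thesis unfolding eps_s_def[of "eps_s x * y"] eps_s_def[of "x*y"] by simp
qed

lemma eps_s_eps_t_commute: "eps_s a * eps_t b = eps_t b * eps_s a"
proof -
  \<comment> \<open>both products equal \<open>eps(1\<^sub>1 b) 1\<^sub>2 eps(a 1\<^sub>3)\<close>, by the two forms of \<open>\<Delta>\<^sup>2(1)\<close>\<close>
  let ?F = "\<lambda>l1 m l3. s (eps (l1*b) * eps (a*l3)) m"
  have F: "trilinear_map s s ?F"
    by (intro linear_intros)
  have "eps_s a * eps_t b = \<Delta> 1 (\<lambda>c d. \<Delta> 1 (\<lambda>a' b'. ?F a' (c*b') d))"
    unfolding eps_s_def eps_t_def
    by (simp only: sum2_mult_right)
      (simp add: sum2_mult_left scale_mult_left_H[symmetric] scale_mult_right_H[symmetric]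
        vector_space_scale_scale[OF vector_space_H] mult.commute)
  also have "\<dots> = \<Delta> 1 (\<lambda>a' b'. \<Delta> 1 (\<lambda>c d. ?F a' (b'*c) d))"
    using unit_weak_comult1_sweedler[OF F] unit_weak_comult2_sweedler[OF F] by simp
  also have "\<dots> = eps_t b * eps_s a"
    unfolding eps_s_def eps_t_def
    by (simp only: sum2_mult_right)
      (simp add: sum2_mult_left scale_mult_left_H[symmetric] scale_mult_right_H[symmetric]
        vector_space_scale_scale[OF vector_space_H] mult.commute)
  finally show ?thesis .
qed

lemma comult_mult_eps_t:
  assumes f: "bilinear_map s sV f"
  shows "\<Delta> (x * eps_t y) f = \<Delta> x (\<lambda>a b. f (a * eps_t y) b)"
proof -
  note lin = bilinear_map_compose_left[OF f] bilinear_map_compose_right[OF f]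
    bilinear_map_vector_space[OF f]
  have "\<Delta> (x * eps_t y) f = \<Delta> x (\<lambda>a b. \<Delta> (eps_t y) (\<lambda>c d. f (a*c) (b*d)))"
    by (rule comult_mult_sweedler[where sV = sV]) (rule f)
  also have "\<dots> = \<Delta> x (\<lambda>a b. \<Delta> 1 (\<lambda>c d. f (a*(c * eps_t y)) (b*d)))"
    by (rule sum2_cong, rule comult_eps_t_unit_mult[where sV = sV]) (intro linear_intros lin)
  also have "\<dots> = \<Delta> x (\<lambda>a b. f (a * eps_t y) b)"
    by (subst sweedler_unit_right[where sV = sV and f = "\<lambda>u v. f (u * eps_t y) v"])
      (intro linear_intros lin, simp add: mult.assoc)
  finally show ?thesis .
qed

lemma comult_eps_s_mult:
  assumes f: "bilinear_map s sV f"
  shows "\<Delta> (eps_s x * y) f = \<Delta> y (\<lambda>a b. f a (eps_s x * b))"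
proof -
  note lin = bilinear_map_compose_left[OF f] bilinear_map_compose_right[OF f]
    bilinear_map_vector_space[OF f]
  have "\<Delta> (eps_s x * y) f = \<Delta> (eps_s x) (\<lambda>a b. \<Delta> y (\<lambda>c d. f (a*c) (b*d)))"
    by (rule comult_mult_sweedler[where sV = sV]) (rule f)
  also have "\<dots> = \<Delta> 1 (\<lambda>a b. \<Delta> y (\<lambda>c d. f (a*c) (eps_s x * b * d)))"
    by (rule comult_eps_s_mult_unit[where sV = sV]) (intro linear_intros lin)
  also have "\<dots> = \<Delta> y (\<lambda>a b. f a (eps_s x * b))"
    by (subst sweedler_unit_left[where sV = sV and f = "\<lambda>u v. f u (eps_s x * v)"])
      (intro linear_intros lin, simp add: mult.assoc)
  finally show ?thesis .
qed

lemma eps_s_mult: "eps_s (x * y) = \<Delta> y (\<lambda>c d. S c * (eps_s x * d))"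
proof -
  have "eps_s (x * y) = eps_s (eps_s x * y)" by (simp add: eps_s_eps_s_mult)
  also have "\<dots> = \<Delta> (eps_s x * y) (\<lambda>a b. S a * b)" by (rule eps_s_sweedler)
  also have "\<dots> = \<Delta> y (\<lambda>c d. S c * (eps_s x * d))"
    by (rule comult_eps_s_mult[where sV = s]) (intro linear_intros)
  finally show ?thesis .
qed

lemma antipode_mult_eps_s: "S (x * y) = \<Delta> x (\<lambda>a v. \<Delta> y (\<lambda>c w. eps_s (a * c) * (S w * S v)))"
proof -
  have "S (x * y) = \<Delta> (x*y) (\<lambda>a b. S a * eps_t b)" by (rule antipode_eq_S_eps_t)
  also have "\<dots> = \<Delta> x (\<lambda>a b. \<Delta> y (\<lambda>c d. S (a*c) * eps_t (b*d)))"
    by (rule comult_mult_sweedler[where sV = s]) (intro linear_intros)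
  also have "\<dots> = \<Delta> x (\<lambda>a b. \<Delta> y (\<lambda>c d. S (a*c) * \<Delta> (b * eps_t d) (\<lambda>u v. u * S v)))"
    by (simp only: eps_t_mult_eps_t eps_t_sweedler[symmetric])
  also have "\<dots> = \<Delta> x (\<lambda>a b. \<Delta> y (\<lambda>c d. S (a*c) * \<Delta> b (\<lambda>u v. u * eps_t d * S v)))"
    by (intro sum2_cong arg_cong2[where f = "(*)"] refl comult_mult_eps_t[where sV = s])
      (intro linear_intros)
  also have "\<dots> = \<Delta> x (\<lambda>a b. \<Delta> b (\<lambda>u v. \<Delta> y (\<lambda>c d. \<Delta> d (\<lambda>u' v'. S (a*c) * (u * (u' * (S v' * S v)))))))"
    by (simp add: eps_t_sweedler[of "_::'h"] sum2_mult_left sum2_mult_right mult.assoc sum2_swap[of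
      "cop y"])
  also have "\<dots> = \<Delta> x (\<lambda>a1 v. \<Delta> a1 (\<lambda>a u. \<Delta> y (\<lambda>c d. \<Delta> d (\<lambda>u' v'. S (a*c) * (u * (u' * (S v' * S v)))))))"
    by (rule coassoc_sweedler[where sV = s, symmetric]) (intro linear_intros)
  also have "\<dots> = \<Delta> x (\<lambda>a1 v. \<Delta> a1 (\<lambda>a u. \<Delta> y (\<lambda>c1 v'. \<Delta> c1 (\<lambda>c u'. S (a*c) * (u * (u' * (S v' * S v)))))))"
    by (intro sum2_cong coassoc_sweedler[where sV = s, symmetric]) (intro linear_intros)
  also have "\<dots> = \<Delta> x (\<lambda>a1 v. \<Delta> y (\<lambda>c1 v'. \<Delta> a1 (\<lambda>a u. \<Delta> c1 (\<lambda>c u'. S (a*c) * (u * u') * (S v' * S v)))))"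
    by (simp add: sum2_swap[of "cop y"] mult.assoc)
  also have "\<dots> = \<Delta> x (\<lambda>a1 v. \<Delta> y (\<lambda>c1 v'. \<Delta> (a1*c1) (\<lambda>p q. S p * q) * (S v' * S v)))"
    by (intro sum2_cong)
      (simp add: comult_mult_sweedler[where sV = s] sum2_mult_right linear_intros)
  finally show ?thesis by (simp only: eps_s_sweedler)
qed

lemma antipode_mult: "S (x * y) = S y * S x"
proof -
  have "S (x * y) = \<Delta> x (\<lambda>a v. \<Delta> y (\<lambda>c w. eps_s (a * c) * (S w * S v)))"
    by (rule antipode_mult_eps_s)
  also have "\<dots> = \<Delta> x (\<lambda>a v. \<Delta> y (\<lambda>c1 w. \<Delta> c1 (\<lambda>c u. S c * (eps_s a * (u * (S w * S v))))))"
    by (simp add: eps_s_mult sum2_mult_right mult.assoc)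
  also have "\<dots> = \<Delta> x (\<lambda>a v. \<Delta> y (\<lambda>c w. \<Delta> w (\<lambda>u w'. S c * (eps_s a * (u * (S w' * S v))))))"
    by (intro sum2_cong coassoc_sweedler[where sV = s]) (intro linear_intros)
  also have "\<dots> = \<Delta> x (\<lambda>a v. \<Delta> y (\<lambda>c w. S c * (eps_s a * (eps_t w * S v))))"
    by (simp add: eps_t_sweedler[of "_::'h"] sum2_mult_left sum2_mult_right mult.assoc)
  also have "\<dots> = \<Delta> x (\<lambda>a v. \<Delta> y (\<lambda>c w. (S c * eps_t w) * (eps_s a * S v)))"
    by (simp add: eps_s_eps_t_commute mult.assoc flip: mult.assoc[of "eps_s _" "eps_t _"])
  also have "\<dots> = S y * S x"
    by (simp add: antipode_eq_S_eps_t[of y] antipode_eq_eps_s_S[of x] sum2_mult_left sum2_mult_right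
        sum2_swap[of "cop y"])
  finally show ?thesis .
qed

lemma eps_t_1: "eps_t 1 = 1"
  unfolding eps_t_def using counit_left_sweedler[OF linear_id_H, of 1] by simp

lemma eps_s_1: "eps_s 1 = 1"
  unfolding eps_s_def using counit_right_sweedler[OF linear_id_H, of 1] by simp
lemma unit_antipode_right_eps_s:
  assumes f: "bilinear_map s sV f"
  shows "\<Delta> 1 (\<lambda>a b. f a (S b)) = \<Delta> 1 (\<lambda>a b. f a (eps_s b))"
proof -
  note lin = bilinear_map_compose_left[OF f] bilinear_map_compose_right[OF f]
    bilinear_map_vector_space[OF f]
  have "\<Delta> 1 (\<lambda>a b. f a (S b)) = \<Delta> 1 (\<lambda>a b. f a (S b * eps_s 1))"
    by (simp add: eps_s_1)
  also have "\<dots> = \<Delta> 1 (\<lambda>a b. \<Delta> 1 (\<lambda>c d. f a (S b * (S c * d))))"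
    by (simp only: eps_s_sweedler[of 1] sum2_mult_left bilinear_map_sum2_right[OF f])
  also have "\<dots> = \<Delta> 1 (\<lambda>c d. \<Delta> 1 (\<lambda>a b. f a (S (c*b) * d)))"
    by (subst sum2_swap) (simp add: antipode_mult mult.assoc)
  also have "\<dots> = \<Delta> 1 (\<lambda>a b. \<Delta> b (\<lambda>c d. f a (S c * d)))"
    by (rule unit_weak_comult1_sweedler[where sV = sV]) (intro linear_intros lin)
  also have "\<dots> = \<Delta> 1 (\<lambda>a b. f a (eps_s b))"
    by (simp add: eps_s_sweedler bilinear_map_sum2_right[OF f])
  finally show ?thesis .
qed

lemma unit_antipode_left_eps_t:
  assumes f: "bilinear_map s sV f"
  shows "\<Delta> 1 (\<lambda>a b. f (S a) b) = \<Delta> 1 (\<lambda>a b. f (eps_t a) b)"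
proof -
  note lin = bilinear_map_compose_left[OF f] bilinear_map_compose_right[OF f]
    bilinear_map_vector_space[OF f]
  have "\<Delta> 1 (\<lambda>a b. f (S a) b) = \<Delta> 1 (\<lambda>a b. f (eps_t 1 * S a) b)"
    by (simp add: eps_t_1)
  also have "\<dots> = \<Delta> 1 (\<lambda>a b. \<Delta> 1 (\<lambda>c d. f (c * S (a * d)) b))"
    by (simp only: eps_t_sweedler[of 1] sum2_mult_right bilinear_map_sum2_left[OF f])
      (simp add: antipode_mult mult.assoc)
  also have "\<dots> = \<Delta> 1 (\<lambda>x y. \<Delta> y (\<lambda>u v. f (x * S u) v))"
    by (rule unit_weak_comult1_sweedler[where sV = sV]) (intro linear_intros lin)
  also have "\<dots> = \<Delta> 1 (\<lambda>p v. \<Delta> p (\<lambda>x u. f (x * S u) v))"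
    by (rule coassoc_sweedler[where sV = sV, symmetric]) (intro linear_intros lin)
  also have "\<dots> = \<Delta> 1 (\<lambda>a b. f (eps_t a) b)"
    by (simp add: eps_t_sweedler bilinear_map_sum2_left[OF f])
  finally show ?thesis .
qed

lemma eps_s_antipode: "\<Delta> 1 (\<lambda>a b. s (eps (y*a)) (S b)) = eps_s y"
proof -
  have "\<Delta> 1 (\<lambda>a b. s (eps (y*a)) (S b)) = \<Delta> 1 (\<lambda>a b. s (eps (y*a)) (eps_s b))"
    by (rule unit_antipode_right_eps_s[where sV = s]) (intro linear_intros)
  also have "\<dots> = \<Delta> 1 (\<lambda>c d. s (\<Delta> 1 (\<lambda>a b. eps (y*a) * eps (b*d))) c)"
    unfolding eps_s_def
      by (simp add: scale_sum2[OF vector_space_H] vector_space_scale_scale[OF vector_space_H]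
        scale_sum2_left[OF vector_space_H]; rule sum2_swap)
  also have "\<dots> = eps_s y"
    unfolding eps_s_def by (simp add: counit_weak_mult1)
  finally show ?thesis .
qed

lemma eps_t_antipode: "\<Delta> 1 (\<lambda>a b. s (eps (b*y)) (S a)) = eps_t y"
proof -
  have "\<Delta> 1 (\<lambda>a b. s (eps (b*y)) (S a)) = \<Delta> 1 (\<lambda>a b. s (eps (b*y)) (eps_t a))"
    by (rule unit_antipode_left_eps_t[where sV = s]) (intro linear_intros)
  also have "\<dots> = \<Delta> 1 (\<lambda>a b. \<Delta> 1 (\<lambda>c d. s (eps (c*a) * eps (b*y)) d))"
  proof (rule sum2_cong)
    fix a b show "s (eps (b*y)) (eps_t a) = \<Delta> 1 (\<lambda>c d. s (eps (c*a) * eps (b*y)) d)"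
      unfolding eps_t_def
      by (simp add: scale_sum2[OF vector_space_H] vector_space_scale_scale[OF vector_space_H]
          mult.commute)
  qed
  also have "\<dots> = \<Delta> 1 (\<lambda>c d. \<Delta> 1 (\<lambda>a b. s (eps (c*a) * eps (b*y)) d))"
    by (rule sum2_swap)
  also have "\<dots> = \<Delta> 1 (\<lambda>c d. s (\<Delta> 1 (\<lambda>a b. eps (c*a) * eps (b*y))) d)"
    by (simp add: scale_sum2_left[OF vector_space_H])
  also have "\<dots> = eps_t y"
    unfolding eps_t_def by (simp add: counit_weak_mult1)
  finally show ?thesis .
qed

lemma unit_mult_left_expand:
  assumes f: "bilinear_map s sV f"
  shows "\<Delta> 1 (\<lambda>a b. f (x*a) b) = \<Delta> x (\<lambda>u v. \<Delta> 1 (\<lambda>a b. f u (s (eps (v*a)) b)))"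
proof -
  note lin = bilinear_map_compose_left[OF f] bilinear_map_compose_right[OF f]
    bilinear_map_vector_space[OF f]
  have "\<Delta> 1 (\<lambda>a b. f (x*a) b) = \<Delta> 1 (\<lambda>a b. \<Delta> (x*a) (\<lambda>c d. sV (eps d) (f c b)))"
    by (rule sum2_cong, rule counit_right_sweedler[where sV = sV, symmetric])
      (intro linear_intros lin)
  also have "\<dots> = \<Delta> 1 (\<lambda>a b. \<Delta> x (\<lambda>u v. \<Delta> a (\<lambda>c d. sV (eps (v*d)) (f (u*c) b))))"
    by (rule sum2_cong, rule comult_mult_sweedler[where sV = sV]) (intro linear_intros lin)
  also have "\<dots> = \<Delta> x (\<lambda>u v. \<Delta> 1 (\<lambda>a b. \<Delta> a (\<lambda>c d. sV (eps (v*d)) (f (u*c) b))))"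
    by (rule sum2_swap)
  also have "\<dots> = \<Delta> x (\<lambda>u v. \<Delta> 1 (\<lambda>a b. \<Delta> b (\<lambda>c d. sV (eps (v*c)) (f (u*a) d))))"
    by (rule sum2_cong, rule coassoc_sweedler[where sV = sV]) (intro linear_intros lin)
  also have "\<dots> = \<Delta> x (\<lambda>u v. \<Delta> 1 (\<lambda>a b. \<Delta> 1 (\<lambda>c d. sV (eps (v*(b*c))) (f (u*a) d))))"
    by (rule sum2_cong, rule unit_weak_comult2_sweedler[where sV = sV, symmetric])
      (intro linear_intros lin)
  also have "\<dots> = \<Delta> x (\<lambda>u v. \<Delta> 1 (\<lambda>c d. sV (eps (v*c)) (f u d)))"
    by (subst sweedler_unit_right[where sV = sV and f = "\<lambda>u v. \<Delta> 1 (\<lambda>c d. sV (eps (v*c)) (f u d))"])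
      (intro linear_intros lin, simp add: mult.assoc)
  also have "\<dots> = \<Delta> x (\<lambda>u v. \<Delta> 1 (\<lambda>a b. f u (s (eps (v*a)) b)))"
    by (simp add: bilinear_map_scale_right[OF f])
  finally show ?thesis .
qed

lemma sweedler_eps_s_right:
  assumes f: "bilinear_map s sV f"
  shows "\<Delta> x (\<lambda>a b. f a (eps_s b)) = \<Delta> 1 (\<lambda>a b. f (x*a) (S b))"
proof -
  note lin = bilinear_map_compose_left[OF f] bilinear_map_compose_right[OF f]
    bilinear_map_vector_space[OF f]
  have "\<Delta> 1 (\<lambda>a b. f (x*a) (S b)) = \<Delta> x (\<lambda>u v. \<Delta> 1 (\<lambda>a b. f u (S (s (eps (v*a)) b))))"
    by (rule unit_mult_left_expand[where sV = sV]) (intro linear_intros lin)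
  also have "\<dots> = \<Delta> x (\<lambda>u v. f u (\<Delta> 1 (\<lambda>a b. s (eps (v*a)) (S b))))"
    by (simp add: antipode_scale bilinear_map_sum2_right[OF f])
  also have "\<dots> = \<Delta> x (\<lambda>a b. f a (eps_s b))" by (simp add: eps_s_antipode)
  finally show ?thesis by simp
qed

lemma unit_mult_right_expand:
  assumes f: "bilinear_map s sV f"
  shows "\<Delta> 1 (\<lambda>a b. f a (b*x)) = \<Delta> x (\<lambda>u v. \<Delta> 1 (\<lambda>a b. f (s (eps (b*u)) a) v))"
proof -
  note lin = bilinear_map_compose_left[OF f] bilinear_map_compose_right[OF f]
    bilinear_map_vector_space[OF f]
  have "\<Delta> 1 (\<lambda>a b. f a (b*x)) = \<Delta> 1 (\<lambda>a b. \<Delta> (b*x) (\<lambda>c d. sV (eps c) (f a d)))"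
    by (rule sum2_cong, rule counit_left_sweedler[where sV = sV, symmetric])
      (intro linear_intros lin)
  also have "\<dots> = \<Delta> 1 (\<lambda>a b. \<Delta> b (\<lambda>c d. \<Delta> x (\<lambda>u v. sV (eps (c*u)) (f a (d*v)))))"
    by (rule sum2_cong, rule comult_mult_sweedler[where sV = sV]) (intro linear_intros lin)
  also have "\<dots> = \<Delta> 1 (\<lambda>a b. \<Delta> 1 (\<lambda>c d. \<Delta> x (\<lambda>u v. sV (eps (b*c*u)) (f a (d*v)))))"
    by (rule unit_weak_comult2_sweedler[where sV = sV, symmetric]) (intro linear_intros lin)
  also have "\<dots> = \<Delta> 1 (\<lambda>a b. \<Delta> x (\<lambda>u v. sV (eps (b*u)) (f a v)))"
    by (rule sum2_cong, subst sweedler_unit_left[where sV = sV and f =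
      "\<lambda>u v. sV (eps (b*u)) (f a v)" for b a])
      (intro linear_intros lin, simp add: mult.assoc)
  also have "\<dots> = \<Delta> x (\<lambda>u v. \<Delta> 1 (\<lambda>a b. f (s (eps (b*u)) a) v))"
    by (simp add: bilinear_map_scale_left[OF f] sum2_swap[of "cop 1"])
  finally show ?thesis .
qed

lemma sweedler_eps_t_left:
  assumes f: "bilinear_map s sV f"
  shows "\<Delta> x (\<lambda>a b. f (eps_t a) b) = \<Delta> 1 (\<lambda>a b. f (S a) (b*x))"
proof -
  note lin = bilinear_map_compose_left[OF f] bilinear_map_compose_right[OF f]
    bilinear_map_vector_space[OF f]
  have "\<Delta> 1 (\<lambda>a b. f (S a) (b*x)) = \<Delta> x (\<lambda>u v. \<Delta> 1 (\<lambda>a b. f (S (s (eps (b*u)) a)) v))"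
    by (rule unit_mult_right_expand[where sV = sV]) (intro linear_intros lin)
  also have "\<dots> = \<Delta> x (\<lambda>u v. f (\<Delta> 1 (\<lambda>a b. s (eps (b*u)) (S a))) v)"
    by (simp add: antipode_scale bilinear_map_sum2_left[OF f])
  also have "\<dots> = \<Delta> x (\<lambda>a b. f (eps_t a) b)" by (simp add: eps_t_antipode)
  finally show ?thesis by simp
qed

lemma unit_antipode_antipode:
  assumes f: "bilinear_map s sV f"
  shows "\<Delta> 1 (\<lambda>a b. f (S a) (S b)) = \<Delta> 1 (\<lambda>a b. f b a)"
proof -
  have vs: "Vector_Spaces.vector_space sV" by (rule bilinear_map_vector_space[OF f])
  note lin = bilinear_map_compose_left[OF f] bilinear_map_compose_right[OF f] vs
  have "\<Delta> 1 (\<lambda>a b. f (S a) (S b)) = \<Delta> 1 (\<lambda>a b. f (S a) (eps_s b))"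
    by (rule unit_antipode_right_eps_s[where sV = sV]) (intro linear_intros lin)
  also have "\<dots> = \<Delta> 1 (\<lambda>a b. f (eps_t a) (eps_s b))"
    by (rule unit_antipode_left_eps_t[where sV = sV]) (intro linear_intros lin)
  also have "\<dots> = \<Delta> 1 (\<lambda>a b. \<Delta> 1 (\<lambda>c d. \<Delta> 1 (\<lambda>a' b'. sV (eps (b*d) * eps (a'*a)) (f b' c))))"
    unfolding eps_t_def eps_s_def
    by (simp add: bilinear_map_sum2_left[OF f] bilinear_map_sum2_right[OF f]
      bilinear_map_scale_left[OF f] bilinear_map_scale_right[OF f] scale_sum2[OF vs]
        vector_space_scale_scale[OF vs])
  also have "\<dots> = \<Delta> 1 (\<lambda>c d. \<Delta> 1 (\<lambda>a b. \<Delta> 1 (\<lambda>a' b'. sV (eps (b*d) * eps (a'*a)) (f b' c))))"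
    by (rule sum2_swap)
  also have "\<dots> = \<Delta> 1 (\<lambda>c d. \<Delta> 1 (\<lambda>a' b'. \<Delta> 1 (\<lambda>a b. sV (eps (b*d) * eps (a'*a)) (f b' c))))"
    by (rule sum2_cong, rule sum2_swap)
  also have "\<dots> = \<Delta> 1 (\<lambda>c d. \<Delta> 1 (\<lambda>a' b'. sV (eps (a'*d)) (f b' c)))"
  proof (intro sum2_cong)
    fix c d a' b'
    have e: "\<Delta> 1 (\<lambda>a b. eps (b*d) * eps (a'*a)) = eps (a'*d)"
      using counit_weak_mult1[of 1 a' d] by (simp add: mult.commute)
    show "\<Delta> 1 (\<lambda>a b. sV (eps (b*d) * eps (a'*a)) (f b' c)) = sV (eps (a'*d)) (f b' c)"
      by (simp add: scale_sum2_left[OF vs, symmetric] e)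
  qed
  also have "\<dots> = \<Delta> 1 (\<lambda>c d. f (eps_t d) c)"
    unfolding eps_t_def by (simp add: bilinear_map_sum2_left[OF f] bilinear_map_scale_left[OF f])
  also have "\<dots> = \<Delta> 1 (\<lambda>a b. f b (a*1))"
    by (rule sweedler_eps_t_right[where sV = sV and f = "\<lambda>a b. f b a"]) (intro linear_intros lin)
  finally show ?thesis by simp
qed

lemma comult_eps_t_expand:
  assumes g: "bilinear_map s sV g"
  shows "\<Delta> w (\<lambda>a r. \<Delta> r (\<lambda>b c. \<Delta> a (\<lambda>p q. g (p * S c) (q * S b)))) = \<Delta> (eps_t w) g"
proof -
  note lin = bilinear_map_compose_left[OF g] bilinear_map_compose_right[OF g]
    bilinear_map_vector_space[OF g]
  have "\<Delta> w (\<lambda>a r. \<Delta> r (\<lambda>b c. \<Delta> a (\<lambda>p q. g (p * S c) (q * S b))))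
      = \<Delta> w (\<lambda>a r. \<Delta> a (\<lambda>p q. \<Delta> r (\<lambda>b c. g (p * S c) (q * S b))))"
    by (rule sum2_cong, rule sum2_swap)
  also have "\<dots> = \<Delta> w (\<lambda>p t. \<Delta> t (\<lambda>q r. \<Delta> r (\<lambda>b c. g (p * S c) (q * S b))))"
    by (rule coassoc_sweedler[where sV = sV]) (intro linear_intros lin)
  also have "\<dots> = \<Delta> w (\<lambda>p t. \<Delta> t (\<lambda>m c. \<Delta> m (\<lambda>q b. g (p * S c) (q * S b))))"
    by (rule sum2_cong, rule coassoc_sweedler[where sV = sV, symmetric]) (intro linear_intros lin)
  also have "\<dots> = \<Delta> w (\<lambda>p t. \<Delta> t (\<lambda>m c. g (p * S c) (eps_t m)))"
    by (simp add: eps_t_sweedler[of "_::'h"] bilinear_map_sum2_right[OF g])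
  also have "\<dots> = \<Delta> w (\<lambda>y c. \<Delta> y (\<lambda>p m. g (p * S c) (eps_t m)))"
    by (rule coassoc_sweedler[where sV = sV, symmetric]) (intro linear_intros lin)
  also have "\<dots> = \<Delta> w (\<lambda>y c. \<Delta> 1 (\<lambda>a b. g (a * y * S c) b))"
    by (rule sum2_cong, rule sweedler_eps_t_right[where sV = sV and f = "\<lambda>u v. g (u * S c) v" for c])
      (intro linear_intros lin)
  also have "\<dots> = \<Delta> 1 (\<lambda>a b. \<Delta> w (\<lambda>y c. g (a * (y * S c)) b))"
    by (subst sum2_swap) (simp add: mult.assoc)
  also have "\<dots> = \<Delta> 1 (\<lambda>a b. g (a * eps_t w) b)"
    by (simp add: eps_t_sweedler[of w] bilinear_map_sum2_left[OF g] sum2_mult_left)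
  also have "\<dots> = \<Delta> (eps_t w) g"
    by (rule comult_eps_t_unit_mult[where sV = sV, symmetric]) (rule g)
  finally show ?thesis .
qed

lemma unit_mult_eps_s_antipode:
  assumes f: "bilinear_map s sV f"
  shows "\<Delta> z (\<lambda>y x. \<Delta> 1 (\<lambda>a b. f a (b * eps_s y * S x))) = \<Delta> 1 (\<lambda>a b. f a (b * S z))"
proof -
  have "\<Delta> z (\<lambda>y x. \<Delta> 1 (\<lambda>a b. f a (b * eps_s y * S x)))
      = \<Delta> 1 (\<lambda>a b. \<Delta> z (\<lambda>y x. f a (b * (eps_s y * S x))))"
    by (subst sum2_swap) (simp add: mult.assoc)
  also have "\<dots> = \<Delta> 1 (\<lambda>a b. f a (b * S z))"
    by (simp only: antipode_eq_eps_s_S[of z] sum2_mult_left bilinear_map_sum2_right[OF f])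
  finally show ?thesis .
qed

text \<open>The next two lemmas evaluate \<open>S(x\<^sub>1)\<^sub>1 x\<^sub>2 S(x\<^sub>5) \<otimes> S(x\<^sub>1)\<^sub>2 x\<^sub>3 S(x\<^sub>4)\<close> in two ways:
  as \<open>\<Delta>(S(x\<^sub>1) eps_t(x\<^sub>2))\<close>, and as \<open>\<Delta>(eps_s(x\<^sub>1)) (S(x\<^sub>3) \<otimes> S(x\<^sub>2))\<close>.\<close>

lemma antipode_comult_expand_left:
  assumes f: "bilinear_map s sV f"
  shows "\<Delta> x (\<lambda>x1 r. \<Delta> r (\<lambda>x2 r2. \<Delta> r2 (\<lambda>x3 x4.
           \<Delta> (S x1) (\<lambda>p q. \<Delta> x2 (\<lambda>p' q'. f (p * (p' * S x4)) (q * (q' * S x3)))))))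
       = \<Delta> (S x) f"
proof -
  note lin = bilinear_map_compose_left[OF f] bilinear_map_compose_right[OF f]
    bilinear_map_vector_space[OF f]
  have "\<Delta> x (\<lambda>x1 r. \<Delta> r (\<lambda>x2 r2. \<Delta> r2 (\<lambda>x3 x4.
           \<Delta> (S x1) (\<lambda>p q. \<Delta> x2 (\<lambda>p' q'. f (p * (p' * S x4)) (q * (q' * S x3)))))))
      = \<Delta> x (\<lambda>x1 r. \<Delta> (S x1) (\<lambda>p q. \<Delta> r (\<lambda>x2 r2. \<Delta> r2 (\<lambda>x3 x4.
           \<Delta> x2 (\<lambda>p' q'. f (p * (p' * S x4)) (q * (q' * S x3)))))))"
    by (simp only: sum2_swap[of "cop _" "cop (S _)"])
  also have "\<dots> = \<Delta> x (\<lambda>x1 r. \<Delta> (S x1) (\<lambda>p q. \<Delta> (eps_t r) (\<lambda>p' q'. f (p * p') (q * q'))))"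
    by (intro sum2_cong comult_eps_t_expand[where sV = sV]) (intro linear_intros lin)
  also have "\<dots> = \<Delta> x (\<lambda>x1 r. \<Delta> (S x1 * eps_t r) f)"
    by (rule sum2_cong, rule comult_mult_sweedler[where sV = sV, symmetric]) (rule f)
  also have "\<dots> = \<Delta> (S x) f"
    by (simp add: antipode_eq_S_eps_t[of x] sweedler_sum2[OF f])
  finally show ?thesis .
qed

lemma antipode_comult_expand_right:
  assumes f: "bilinear_map s sV f"
  shows "\<Delta> x (\<lambda>x1 r. \<Delta> r (\<lambda>x2 r2. \<Delta> r2 (\<lambda>x3 x4.
           \<Delta> (S x1) (\<lambda>p q. \<Delta> x2 (\<lambda>p' q'. f (p * (p' * S x4)) (q * (q' * S x3)))))))
       = \<Delta> x (\<lambda>a b. f (S b) (S a))"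
proof -
  note lin = bilinear_map_compose_left[OF f] bilinear_map_compose_right[OF f]
    bilinear_map_vector_space[OF f]
  have "\<Delta> x (\<lambda>x1 r. \<Delta> r (\<lambda>x2 r2. \<Delta> r2 (\<lambda>x3 x4.
           \<Delta> (S x1) (\<lambda>p q. \<Delta> x2 (\<lambda>p' q'. f (p * (p' * S x4)) (q * (q' * S x3)))))))
      = \<Delta> x (\<lambda>y r2. \<Delta> y (\<lambda>x1 x2. \<Delta> r2 (\<lambda>x3 x4.
           \<Delta> (S x1) (\<lambda>p q. \<Delta> x2 (\<lambda>p' q'. f (p * (p' * S x4)) (q * (q' * S x3)))))))"
    by (rule coassoc_sweedler[where sV = sV, symmetric]) (intro linear_intros lin)
  also have "\<dots> = \<Delta> x (\<lambda>y r2. \<Delta> r2 (\<lambda>x3 x4. \<Delta> y (\<lambda>x1 x2.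
           \<Delta> (S x1) (\<lambda>p q. \<Delta> x2 (\<lambda>p' q'. f (p * (p' * S x4)) (q * (q' * S x3)))))))"
    by (rule sum2_cong, rule sum2_swap)
  also have "\<dots> = \<Delta> x (\<lambda>y r2. \<Delta> r2 (\<lambda>x3 x4. \<Delta> y (\<lambda>x1 x2.
           \<Delta> (S x1 * x2) (\<lambda>p q. f (p * S x4) (q * S x3)))))"
    by (rule sum2_cong, rule sum2_cong, rule sum2_cong, subst comult_mult_sweedler[where sV = sV])
      (intro linear_intros lin, simp add: mult.assoc)
  also have "\<dots> = \<Delta> x (\<lambda>y r2. \<Delta> r2 (\<lambda>x3 x4. \<Delta> (eps_s y) (\<lambda>p q. f (p * S x4) (q * S x3))))"
    by (intro sum2_cong)
      (simp add: eps_s_sweedler[of y for y] sweedler_sum2[where sV = sV] linear_intros lin)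
  also have "\<dots> = \<Delta> x (\<lambda>y r2. \<Delta> r2 (\<lambda>x3 x4. \<Delta> 1 (\<lambda>a b. f (a * S x4) (b * eps_s y * S x3))))"
    by (intro sum2_cong comult_eps_s_unit_mult[where sV = sV]) (intro linear_intros lin)
  also have "\<dots> = \<Delta> x (\<lambda>z x4. \<Delta> z (\<lambda>y x3. \<Delta> 1 (\<lambda>a b. f (a * S x4) (b * eps_s y * S x3))))"
    by (rule coassoc_sweedler[where sV = sV, symmetric]) (intro linear_intros lin)
  also have "\<dots> = \<Delta> x (\<lambda>z w. \<Delta> 1 (\<lambda>a b. f (a * S w) (b * S z)))"
    by (intro sum2_cong unit_mult_eps_s_antipode[where sV = sV and f = "\<lambda>a b. f (a * S w) b" for w])
      (intro linear_intros lin)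
  also have "\<dots> = \<Delta> x (\<lambda>z w. \<Delta> 1 (\<lambda>a b. f (S b * S w) (S a * S z)))"
    by (intro sum2_cong
        unit_antipode_antipode[where sV = sV and f = "\<lambda>a b. f (b * S w) (a * S z)" for w z, symmetric])
      (intro linear_intros lin)
  also have "\<dots> = \<Delta> x (\<lambda>a b. f (S b) (S a))"
    by (subst sweedler_unit_right[where sV = sV and f = "\<lambda>z w. f (S w) (S z)"])
      (intro linear_intros lin, simp add: antipode_mult)
  finally show ?thesis .
qed

lemma antipode_comult:
  "bilinear_map s sV f \<Longrightarrow> \<Delta> (S x) f = \<Delta> x (\<lambda>a b. f (S b) (S a))"
  using antipode_comult_expand_left antipode_comult_expand_right by metis

lemma cocommutative_swap:
  assumes "cocommutative s cop" and "bilinear_map s sV f"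
  shows "\<Delta> h f = \<Delta> h (\<lambda>a b. f b a)"
proof -
  have "teq2 s (cop h) (map (\<lambda>(a,b). (b,a)) (cop h))"
    using assms(1) unfolding cocommutative_def by blast
  from teq2_sum2_eq[OF this assms(2)] show ?thesis by (simp add: sum2_map)
qed

lemma linear_inv_antipode: "bij S \<Longrightarrow> Vector_Spaces.linear s s (inv S)"
  using module_pair.bij_module_hom_imp_inv_module_hom[of s s s s S] linear_antipode vector_space_H
  by (simp add: module_hom_iff_linear module_pair_def module_iff_vector_space)

lemma inv_antipode_mult:
  assumes "bij S"
  shows "inv S (x * y) = inv S y * inv S x"
proof -
  have "S (inv S y * inv S x) = x * y"
    by (simp add: antipode_mult surj_f_inv_f[OF bij_is_surj[OF assms]])
  then show ?thesis by (metis assms bij_inv_eq_iff)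
qed

end

section \<open>Partial representations\<close>

locale partial_rep = weak_hopf s cop eps S
  for s :: "'k::field \<Rightarrow> 'h::{ring,monoid_mult} \<Rightarrow> 'h" and cop eps S +
  fixes sA :: "'k \<Rightarrow> 'a::{ring,monoid_mult} \<Rightarrow> 'a" and p :: "'h \<Rightarrow> 'a"
  assumes par: "par_rep s cop S sA p"
begin

abbreviation "E \<equiv> Epar cop S p"
abbreviation "Et \<equiv> Etpar cop S p"

lemmas par_rep_unfolded = par[unfolded par_rep_def]

lemma k_algebra_A: "k_algebra sA"
  using par_rep_unfolded by blast

lemma vector_space_A [linear_intros]: "Vector_Spaces.vector_space sA"
  using k_algebra_A by (simp add: k_algebra_def)

lemma linear_p: "Vector_Spaces.linear s sA p"
  using par_rep_unfolded by blast

lemma p_1: "p 1 = 1"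
  using par_rep_unfolded by blast

lemma par_left_E: "\<Delta> k (\<lambda>a b. p h * p a * p (S b)) = \<Delta> k (\<lambda>a b. p (h * a) * p (S b))"
  using par_rep_unfolded by blast

lemma par_left_Et: "\<Delta> k (\<lambda>a b. p h * p (S a) * p b) = \<Delta> k (\<lambda>a b. p (h * S a) * p b)"
  using par_rep_unfolded by blast

lemma par_right_E: "\<Delta> h (\<lambda>a b. p a * p (S b) * p k) = \<Delta> h (\<lambda>a b. p a * p (S b * k))"
  using par_rep_unfolded by blast

lemma par_right_Et: "\<Delta> h (\<lambda>a b. p (S a) * p b * p k) = \<Delta> h (\<lambda>a b. p (S a) * p (b * k))"
  using par_rep_unfolded by blast

lemma p_expand: "p h = \<Delta> h (\<lambda>a b. \<Delta> b (\<lambda>c d. p a * p (S c) * p d))"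
proof -
  have "p h = sum3 (cop2 cop h) (\<lambda>a b c. p a * p (S b) * p c)"
    using par_rep_unfolded by blast
  then show ?thesis by (simp only: sum3_cop2)
qed

lemma E_eq: "E h = \<Delta> h (\<lambda>a b. p a * p (S b))"
  by (simp add: Epar_def)

lemma Et_eq: "Et h = \<Delta> h (\<lambda>a b. p (S a) * p b)"
  by (simp add: Etpar_def)

lemma p_mult_E: "p h * E k = \<Delta> k (\<lambda>a b. p (h * a) * p (S b))"
  using par_left_E by (simp add: E_eq sum2_mult_left mult.assoc)

lemma p_mult_Et: "p h * Et k = \<Delta> k (\<lambda>a b. p (h * S a) * p b)"
  using par_left_Et by (simp add: Et_eq sum2_mult_left mult.assoc)

lemma E_mult_p: "E h * p k = \<Delta> h (\<lambda>a b. p a * p (S b * k))"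
  using par_right_E by (simp add: E_eq sum2_mult_right mult.assoc)

lemma Et_mult_p: "Et h * p k = \<Delta> h (\<lambda>a b. p (S a) * p (b * k))"
  using par_right_Et by (simp add: Et_eq sum2_mult_right mult.assoc)

lemma p_sum2: "p (sum2 t G) = sum2 t (\<lambda>c d. p (G c d))"
  by (rule linear_sum2[OF linear_p])

lemma linear_p_comp [linear_intros]:
  "Vector_Spaces.linear s s G \<Longrightarrow> Vector_Spaces.linear s sA (\<lambda>x. p (G x))"
  by (rule linear_compose_fun[OF _ linear_p])

lemma linear_mult_left_A [linear_intros]:
  "Vector_Spaces.linear s sA G \<Longrightarrow> Vector_Spaces.linear s sA (\<lambda>x. c * G x)"
  by (rule linear_mult_left[OF k_algebra_A])

lemma linear_mult_right_A [linear_intros]: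
  "Vector_Spaces.linear s sA G \<Longrightarrow> Vector_Spaces.linear s sA (\<lambda>x. G x * c)"
  by (rule linear_mult_right[OF k_algebra_A])

lemma linear_E_comp [linear_intros]:
  "Vector_Spaces.linear s s G \<Longrightarrow> Vector_Spaces.linear s sA (\<lambda>x. E (G x))"
  unfolding E_eq by (intro linear_intros)

lemma linear_Et_comp [linear_intros]:
  "Vector_Spaces.linear s s G \<Longrightarrow> Vector_Spaces.linear s sA (\<lambda>x. Et (G x))"
  unfolding Et_eq by (intro linear_intros)

lemma E_sum2: "E (sum2 t G) = sum2 t (\<lambda>c d. E (G c d))"
  by (rule linear_sum2[OF linear_E_comp[OF linear_id_H]])

lemma Et_sum2: "Et (sum2 t G) = sum2 t (\<lambda>c d. Et (G c d))"
  by (rule linear_sum2[OF linear_Et_comp[OF linear_id_H]])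

lemma mult_E_expand: "X * E b = \<Delta> b (\<lambda>u v. X * (p u * p (S v)))"
  by (simp add: E_eq[of b] sum2_mult_left)

lemma mult_Et_expand: "X * Et b = \<Delta> b (\<lambda>u v. X * (p (S u) * p v))"
  by (simp add: Et_eq[of b] sum2_mult_left)

lemma E_1: "E 1 = 1"
proof -
  have "1 = p 1" by (simp add: p_1)
  also have "\<dots> = \<Delta> 1 (\<lambda>a b. \<Delta> b (\<lambda>c d. p a * p (S c) * p d))" by (rule p_expand)
  also have "\<dots> = \<Delta> 1 (\<lambda>x d. \<Delta> x (\<lambda>a c. p a * p (S c) * p d))"
    by (rule coassoc_sweedler[where sV = sA, symmetric]) (intro linear_intros)
  also have "\<dots> = \<Delta> 1 (\<lambda>x d. \<Delta> x (\<lambda>a c. p a * p (S c * d)))"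
    by (intro sum2_cong par_right_E)
  also have "\<dots> = \<Delta> 1 (\<lambda>a b. \<Delta> b (\<lambda>c d. p a * p (S c * d)))"
    by (rule coassoc_sweedler[where sV = sA]) (intro linear_intros)
  also have "\<dots> = \<Delta> 1 (\<lambda>a b. p a * p (eps_s b))"
    by (simp add: eps_s_sweedler p_sum2 sum2_mult_left)
  also have "\<dots> = \<Delta> 1 (\<lambda>a b. p (1*a) * p (S b))"
    by (rule sweedler_eps_s_right[where sV = sA]) (intro linear_intros)
  finally show ?thesis by (simp add: E_eq)
qed

lemma E_eps_t: "E (eps_t w) = p (eps_t w)"
proof -
  have "E (eps_t w) = \<Delta> (eps_t w) (\<lambda>a b. p a * p (S b))" by (rule E_eq)
  also have "\<dots> = \<Delta> 1 (\<lambda>a b. p (eps_t w * a) * p (S b))"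
    by (rule comult_eps_t_mult_unit[where sV = sA]) (intro linear_intros)
  also have "\<dots> = p (eps_t w) * E 1" by (simp add: p_mult_E)
  finally show ?thesis by (simp add: E_1)
qed

lemma E_mult_p_assoc: "E h * (p k * Y) = \<Delta> h (\<lambda>a b. p a * (p (S b * k) * Y))"
  by (simp add: mult.assoc[symmetric] E_mult_p sum2_mult_right)

lemma Et_mult_p_assoc: "Et h * (p k * Y) = \<Delta> h (\<lambda>a b. p (S a) * (p (b * k) * Y))"
  by (simp add: mult.assoc[symmetric] Et_mult_p sum2_mult_right)

lemma E_mult_pS_eq_pS_mult_E: "E k * p (S h) = \<Delta> h (\<lambda>a b. p (S a) * E (b * k))"
proof -
  have "\<Delta> h (\<lambda>a b. p (S a) * E (b * k)) = \<Delta> h (\<lambda>a b. \<Delta> (b*k) (\<lambda>c d. p (S a * c) * p (S d)))"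
    by (simp add: p_mult_E)
  also have "\<dots> = \<Delta> h (\<lambda>a b. \<Delta> b (\<lambda>c d. \<Delta> k (\<lambda>u v. p (S a * (c * u)) * p (S (d * v)))))"
    by (rule sum2_cong, rule comult_mult_sweedler[where sV = sA]) (intro linear_intros)
  also have "\<dots> = \<Delta> h (\<lambda>a b. \<Delta> a (\<lambda>c d. \<Delta> k (\<lambda>u v. p (S c * (d * u)) * p (S (b * v)))))"
    by (rule coassoc_sweedler[where sV = sA, symmetric]) (intro linear_intros)
  also have "\<dots> = \<Delta> h (\<lambda>a b. \<Delta> k (\<lambda>u v. p (eps_s a * u) * p (S (b * v))))"
    by (subst sum2_swap) (simp add: eps_s_sweedler sum2_mult_right p_sum2 mult.assoc)
  also have "\<dots> = \<Delta> 1 (\<lambda>a b. \<Delta> k (\<lambda>u v. p (a * u) * p (S (h * b * v))))"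
    by (rule sweedler_eps_s_left[where sV = sA and f =
      "\<lambda>a b. \<Delta> k (\<lambda>u v. p (a * u) * p (S (b * v)))"]) (intro linear_intros)
  also have "\<dots> = \<Delta> k (\<lambda>u v. p u * p (S (h * v)))"
    by (subst sweedler_unit_left[where sV = sA and f = "\<lambda>u v. p u * p (S (h * v))"])
      (intro linear_intros, simp add: mult.assoc)
  also have "\<dots> = E k * p (S h)" by (simp add: E_mult_p antipode_mult)
  finally show ?thesis by simp
qed

lemma p_mult_E_eq_E_mult_p: "p h * E k = \<Delta> h (\<lambda>a b. E (a * k) * p b)"
proof -
  have "\<Delta> h (\<lambda>a b. E (a * k) * p b) = \<Delta> h (\<lambda>a b. \<Delta> (a*k) (\<lambda>c d. p c * p (S d * b)))"
    by (simp add: E_mult_p)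
  also have "\<dots> = \<Delta> h (\<lambda>a b. \<Delta> a (\<lambda>c d. \<Delta> k (\<lambda>u v. p (c*u) * p (S (d*v) * b))))"
    by (rule sum2_cong, rule comult_mult_sweedler[where sV = sA]) (intro linear_intros)
  also have "\<dots> = \<Delta> h (\<lambda>a b. \<Delta> b (\<lambda>c d. \<Delta> k (\<lambda>u v. p (a*u) * p (S (c*v) * d))))"
    by (rule coassoc_sweedler[where sV = sA]) (intro linear_intros)
  also have "\<dots> = \<Delta> h (\<lambda>a b. \<Delta> k (\<lambda>u v. p (a*u) * p (S v * eps_s b)))"
    by (subst sum2_swap) (simp add: eps_s_sweedler antipode_mult sum2_mult_left p_sum2 mult.assoc)
  also have "\<dots> = \<Delta> 1 (\<lambda>a b. \<Delta> k (\<lambda>u v. p (h*a*u) * p (S v * S b)))"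
    by (rule sweedler_eps_s_right[where sV = sA and f = "\<lambda>a b. \<Delta> k (\<lambda>u v. p (a*u) * p (S v * b))"])
      (intro linear_intros)
  also have "\<dots> = \<Delta> k (\<lambda>u v. p (h*u) * p (S v))"
    by (subst sweedler_unit_left[where sV = sA and f = "\<lambda>u v. p (h*u) * p (S v)"])
      (intro linear_intros, simp add: mult.assoc antipode_mult)
  also have "\<dots> = p h * E k" by (simp add: p_mult_E)
  finally show ?thesis by simp
qed

lemma sum_E_mult_E: "\<Delta> h (\<lambda>a b. E a * E b) = E h"
proof -
  have "E h = \<Delta> h (\<lambda>a b. p a * p (S b))" by (rule E_eq)
  also have "\<dots> = \<Delta> h (\<lambda>a b. \<Delta> a (\<lambda>a1 r. \<Delta> r (\<lambda>c d. p a1 * p (S c) * p d)) * p (S b))"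
    by (rule sum2_cong, subst p_expand, rule refl)
  also have "\<dots> = \<Delta> h (\<lambda>a b. \<Delta> a (\<lambda>a1 r. \<Delta> r (\<lambda>c d. p a1 * (p (S c) * (p d * p (S b))))))"
    by (simp add: sum2_mult_right mult.assoc)
  also have "\<dots> = \<Delta> h (\<lambda>a1 b. \<Delta> b (\<lambda>r b'. \<Delta> r (\<lambda>c d. p a1 * (p (S c) * (p d * p (S b'))))))"
    by (rule coassoc_sweedler[where sV = sA]) (intro linear_intros)
  also have "\<dots> = \<Delta> h (\<lambda>a1 b. \<Delta> b (\<lambda>c r. \<Delta> r (\<lambda>d b'. p a1 * (p (S c) * (p d * p (S b'))))))"
    by (rule sum2_cong, rule coassoc_sweedler[where sV = sA]) (intro linear_intros)
  also have "\<dots> = \<Delta> h (\<lambda>a b. \<Delta> a (\<lambda>a1 a2. \<Delta> b (\<lambda>b1 b2. p a1 * (p (S a2) * (p b1 * p (S b2))))))"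
    by (rule coassoc_sweedler[where sV = sA, symmetric]) (intro linear_intros)
  also have "\<dots> = \<Delta> h (\<lambda>a b. E a * E b)"
    by (simp only: E_eq sum2_mult_right) (simp add: sum2_mult_left mult.assoc)
  finally show ?thesis by simp
qed

lemma Et_mult_p_eq_p_mult_Et: "Et k * p h = \<Delta> h (\<lambda>a b. p a * Et (k * b))"
proof -
  have "\<Delta> h (\<lambda>a b. p a * Et (k * b)) = \<Delta> h (\<lambda>a b. \<Delta> (k*b) (\<lambda>c d. p (a * S c) * p d))"
    by (simp add: p_mult_Et)
  also have "\<dots> = \<Delta> h (\<lambda>a b. \<Delta> k (\<lambda>u v. \<Delta> b (\<lambda>c d. p (a * S (u*c)) * p (v*d))))"
    by (rule sum2_cong, rule comult_mult_sweedler[where sV = sA]) (intro linear_intros)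
  also have "\<dots> = \<Delta> h (\<lambda>a b. \<Delta> b (\<lambda>c d. \<Delta> k (\<lambda>u v. p (a * S (u*c)) * p (v*d))))"
    by (rule sum2_cong, rule sum2_swap)
  also have "\<dots> = \<Delta> h (\<lambda>x d. \<Delta> x (\<lambda>a c. \<Delta> k (\<lambda>u v. p (a * S (u*c)) * p (v*d))))"
    by (rule coassoc_sweedler[where sV = sA, symmetric]) (intro linear_intros)
  also have "\<dots> = \<Delta> h (\<lambda>x d. \<Delta> k (\<lambda>u v. p (eps_t x * S u) * p (v*d)))"
    by (subst sum2_swap) (simp add: eps_t_sweedler antipode_mult sum2_mult_right p_sum2 mult.assoc)
  also have "\<dots> = \<Delta> 1 (\<lambda>a b. \<Delta> k (\<lambda>u v. p (S a * S u) * p (v*(b*h))))"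
    by (rule sweedler_eps_t_left[where sV = sA and f = "\<lambda>a b. \<Delta> k (\<lambda>u v. p (a * S u) * p (v*b))"])
      (intro linear_intros)
  also have "\<dots> = \<Delta> k (\<lambda>u v. \<Delta> 1 (\<lambda>a b. p (S (u*a)) * p (v*b*h)))"
    by (subst sum2_swap) (simp add: antipode_mult mult.assoc)
  also have "\<dots> = \<Delta> k (\<lambda>u v. p (S u) * p (v*h))"
    by (subst sweedler_unit_right[where sV = sA and f = "\<lambda>u v. p (S u) * p (v*h)"])
      (intro linear_intros, simp add: mult.assoc)
  also have "\<dots> = Et k * p h" by (simp add: Et_mult_p)
  finally show ?thesis by simp
qed

lemma pS_mult_Et_eq_Et_mult_pS: "p (S h) * Et k = \<Delta> h (\<lambda>a b. Et (k * a) * p (S b))"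
proof -
  have "\<Delta> h (\<lambda>a b. Et (k * a) * p (S b)) = \<Delta> h (\<lambda>a b. \<Delta> (k*a) (\<lambda>c d. p (S c) * p (d * S b)))"
    by (simp add: Et_mult_p)
  also have "\<dots> = \<Delta> h (\<lambda>a b. \<Delta> k (\<lambda>u v. \<Delta> a (\<lambda>c d. p (S (u*c)) * p (v*d*S b))))"
    by (rule sum2_cong, rule comult_mult_sweedler[where sV = sA]) (intro linear_intros)
  also have "\<dots> = \<Delta> h (\<lambda>a b. \<Delta> a (\<lambda>c d. \<Delta> k (\<lambda>u v. p (S (u*c)) * p (v*d*S b))))"
    by (rule sum2_cong, rule sum2_swap)
  also have "\<dots> = \<Delta> h (\<lambda>a b. \<Delta> b (\<lambda>c d. \<Delta> k (\<lambda>u v. p (S (u*a)) * p (v*c*S d))))"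
    by (rule coassoc_sweedler[where sV = sA]) (intro linear_intros)
  also have "\<dots> = \<Delta> h (\<lambda>a b. \<Delta> k (\<lambda>u v. p (S (u*a)) * p (v * eps_t b)))"
    by (subst sum2_swap) (simp add: eps_t_sweedler sum2_mult_left p_sum2 mult.assoc)
  also have "\<dots> = \<Delta> 1 (\<lambda>a b. \<Delta> k (\<lambda>u v. p (S (u*(a*h))) * p (v*b)))"
    by (rule sweedler_eps_t_right[where sV = sA and f = "\<lambda>a b. \<Delta> k (\<lambda>u v. p (S (u*a)) * p (v*b))"])
      (intro linear_intros)
  also have "\<dots> = \<Delta> k (\<lambda>u v. \<Delta> 1 (\<lambda>a b. p (S (u*(a*h))) * p (v*b)))"
    by (rule sum2_swap)
  also have "\<dots> = \<Delta> k (\<lambda>u v. p (S (u*h)) * p v)"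
    by (subst sweedler_unit_right[where sV = sA and f = "\<lambda>u v. p (S (u*h)) * p v"])
      (intro linear_intros, simp add: mult.assoc)
  also have "\<dots> = p (S h) * Et k" by (simp add: p_mult_Et antipode_mult)
  finally show ?thesis by simp
qed

lemma sum_Et_mult_Et: "\<Delta> h (\<lambda>a b. Et a * Et b) = Et h"
proof -
  have "Et h = \<Delta> h (\<lambda>a b. p (S a) * p b)" by (rule Et_eq)
  also have "\<dots> = \<Delta> h (\<lambda>a b. p (S a) * \<Delta> b (\<lambda>b1 r. \<Delta> r (\<lambda>c d. p b1 * p (S c) * p d)))"
    by (rule sum2_cong, subst p_expand[of b for b], rule refl)
  also have "\<dots> = \<Delta> h (\<lambda>a b. \<Delta> b (\<lambda>b1 r. \<Delta> r (\<lambda>c d. p (S a) * (p b1 * (p (S c) * p d)))))"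
    by (simp add: sum2_mult_left mult.assoc)
  also have "\<dots> = \<Delta> h (\<lambda>a b. \<Delta> a (\<lambda>a1 a2. \<Delta> b (\<lambda>b1 b2. p (S a1) * (p a2 * (p (S b1) * p b2)))))"
    by (rule coassoc_sweedler[where sV = sA, symmetric]) (intro linear_intros)
  also have "\<dots> = \<Delta> h (\<lambda>a b. Et a * Et b)"
    by (simp only: Et_eq sum2_mult_right) (simp add: sum2_mult_left mult.assoc)
  finally show ?thesis by simp
qed

lemma p_mult_E_eq_p_E_Et: "p h * E k = \<Delta> h (\<lambda>a b. p a * E k * Et b)"
proof -
  have "\<Delta> h (\<lambda>a b. p a * E k * Et b) = \<Delta> h (\<lambda>a b. \<Delta> k (\<lambda>u v. p (a*u) * (p (S v) * Et b)))"
    by (simp add: p_mult_E sum2_mult_right mult.assoc)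
  also have "\<dots> = \<Delta> h (\<lambda>a b. \<Delta> k (\<lambda>u v. \<Delta> b (\<lambda>c d. p (a*u) * (p (S (c*v)) * p d))))"
    by (simp add: p_mult_Et antipode_mult sum2_mult_left mult.assoc)
  also have "\<dots> = \<Delta> h (\<lambda>a b. \<Delta> b (\<lambda>c d. \<Delta> k (\<lambda>u v. p (a*u) * (p (S (c*v)) * p d))))"
    by (rule sum2_cong, rule sum2_swap)
  also have "\<dots> = \<Delta> h (\<lambda>x d. \<Delta> x (\<lambda>a c. \<Delta> k (\<lambda>u v. p (a*u) * (p (S (c*v)) * p d))))"
    by (rule coassoc_sweedler[where sV = sA, symmetric]) (intro linear_intros)
  also have "\<dots> = \<Delta> h (\<lambda>x d. \<Delta> (x*k) (\<lambda>y z. p y * (p (S z) * p d)))"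
    by (rule sum2_cong, rule comult_mult_sweedler[where sV = sA, symmetric]) (intro linear_intros)
  also have "\<dots> = \<Delta> h (\<lambda>x d. E (x*k) * p d)"
    by (simp add: E_eq sum2_mult_right mult.assoc)
  also have "\<dots> = p h * E k" by (simp add: p_mult_E_eq_E_mult_p)
  finally show ?thesis by simp
qed

lemma E_mult_pS_eq_Et_E_pS: "E k * p (S h) = \<Delta> h (\<lambda>a b. Et a * E k * p (S b))"
proof -
  have "\<Delta> h (\<lambda>a b. Et a * E k * p (S b)) = \<Delta> h (\<lambda>a b. \<Delta> k (\<lambda>u v. Et a * (p u * p (S (b*v)))))"
    by (simp add: mult.assoc E_mult_p antipode_mult sum2_mult_left)
  also have "\<dots> = \<Delta> h (\<lambda>a b. \<Delta> k (\<lambda>u v. \<Delta> a (\<lambda>c d. p (S c) * (p (d*u) * p (S (b*v))))))"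
    by (simp add: Et_mult_p_assoc)
  also have "\<dots> = \<Delta> h (\<lambda>a b. \<Delta> a (\<lambda>c d. \<Delta> k (\<lambda>u v. p (S c) * (p (d*u) * p (S (b*v))))))"
    by (rule sum2_cong, rule sum2_swap)
  also have "\<dots> = \<Delta> h (\<lambda>c r. \<Delta> r (\<lambda>d b. \<Delta> k (\<lambda>u v. p (S c) * (p (d*u) * p (S (b*v))))))"
    by (rule coassoc_sweedler[where sV = sA]) (intro linear_intros)
  also have "\<dots> = \<Delta> h (\<lambda>c r. \<Delta> (r*k) (\<lambda>y z. p (S c) * (p y * p (S z))))"
    by (rule sum2_cong, rule comult_mult_sweedler[where sV = sA, symmetric]) (intro linear_intros)
  also have "\<dots> = \<Delta> h (\<lambda>a b. p (S a) * E (b*k))"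
    by (simp add: E_eq sum2_mult_left)
  also have "\<dots> = E k * p (S h)" by (simp add: E_mult_pS_eq_pS_mult_E)
  finally show ?thesis by simp
qed

lemma Et_mult_p_eq_E_Et_p: "Et k * p h = \<Delta> h (\<lambda>a b. E a * Et k * p b)"
proof -
  have "\<Delta> h (\<lambda>a b. E a * Et k * p b) = \<Delta> h (\<lambda>a b. \<Delta> k (\<lambda>u v. E a * (p (S u) * p (v*b))))"
    by (simp add: mult.assoc Et_mult_p sum2_mult_left)
  also have "\<dots> = \<Delta> h (\<lambda>a b. \<Delta> k (\<lambda>u v. \<Delta> a (\<lambda>c d. p c * (p (S d * S u) * p (v*b)))))"
    by (simp add: E_mult_p_assoc)
  also have "\<dots> = \<Delta> h (\<lambda>a b. \<Delta> a (\<lambda>c d. \<Delta> k (\<lambda>u v. p c * (p (S (u*d)) * p (v*b)))))"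
    by (rule sum2_cong, subst sum2_swap, simp add: antipode_mult)
  also have "\<dots> = \<Delta> h (\<lambda>c r. \<Delta> r (\<lambda>d b. \<Delta> k (\<lambda>u v. p c * (p (S (u*d)) * p (v*b)))))"
    by (rule coassoc_sweedler[where sV = sA]) (intro linear_intros)
  also have "\<dots> = \<Delta> h (\<lambda>c r. \<Delta> k (\<lambda>u v. \<Delta> r (\<lambda>d b. p c * (p (S (u*d)) * p (v*b)))))"
    by (rule sum2_cong, rule sum2_swap)
  also have "\<dots> = \<Delta> h (\<lambda>c r. \<Delta> (k*r) (\<lambda>y z. p c * (p (S y) * p z)))"
    by (rule sum2_cong, rule comult_mult_sweedler[where sV = sA, symmetric]) (intro linear_intros)
  also have "\<dots> = \<Delta> h (\<lambda>a b. p a * Et (k*b))"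
    by (simp add: Et_eq sum2_mult_left)
  also have "\<dots> = Et k * p h" by (simp add: Et_mult_p_eq_p_mult_Et)
  finally show ?thesis by simp
qed

lemma pS_mult_Et_eq_pS_Et_E: "p (S h) * Et k = \<Delta> h (\<lambda>a b. p (S a) * Et k * E b)"
proof -
  have "\<Delta> h (\<lambda>a b. p (S a) * Et k * E b) = \<Delta> h (\<lambda>a b. \<Delta> k (\<lambda>u v. p (S (u*a)) * (p v * E b)))"
    by (simp add: p_mult_Et antipode_mult sum2_mult_right mult.assoc)
  also have "\<dots> = \<Delta> h (\<lambda>a b. \<Delta> k (\<lambda>u v. \<Delta> b (\<lambda>c d. p (S (u*a)) * (p (v*c) * p (S d)))))"
    by (simp add: p_mult_E sum2_mult_left)
  also have "\<dots> = \<Delta> h (\<lambda>a b. \<Delta> b (\<lambda>c d. \<Delta> k (\<lambda>u v. p (S (u*a)) * (p (v*c) * p (S d)))))"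
    by (rule sum2_cong, rule sum2_swap)
  also have "\<dots> = \<Delta> h (\<lambda>x d. \<Delta> x (\<lambda>a c. \<Delta> k (\<lambda>u v. p (S (u*a)) * (p (v*c) * p (S d)))))"
    by (rule coassoc_sweedler[where sV = sA, symmetric]) (intro linear_intros)
  also have "\<dots> = \<Delta> h (\<lambda>x d. \<Delta> k (\<lambda>u v. \<Delta> x (\<lambda>a c. p (S (u*a)) * (p (v*c) * p (S d)))))"
    by (rule sum2_cong, rule sum2_swap)
  also have "\<dots> = \<Delta> h (\<lambda>x d. \<Delta> (k*x) (\<lambda>y z. p (S y) * (p z * p (S d))))"
    by (rule sum2_cong, rule comult_mult_sweedler[where sV = sA, symmetric]) (intro linear_intros)
  also have "\<dots> = \<Delta> h (\<lambda>a b. Et (k*a) * p (S b))"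
    by (simp add: Et_eq sum2_mult_right mult.assoc)
  also have "\<dots> = p (S h) * Et k" by (simp add: pS_mult_Et_eq_Et_mult_pS)
  finally show ?thesis by simp
qed

lemma E_Et_commute: "E h * Et k = Et k * E h"
proof -
  have "Et k * E h = \<Delta> h (\<lambda>a b. Et k * p a * p (S b))"
    by (simp add: E_eq[of h] sum2_mult_left mult.assoc)
  also have "\<dots> = \<Delta> h (\<lambda>a b. \<Delta> a (\<lambda>c d. E c * Et k * p d * p (S b)))"
    by (rule sum2_cong, subst Et_mult_p_eq_E_Et_p, simp add: sum2_mult_right)
  also have "\<dots> = \<Delta> h (\<lambda>c r. \<Delta> r (\<lambda>d b. E c * Et k * p d * p (S b)))"
    by (rule coassoc_sweedler[where sV = sA]) (intro linear_intros)
  also have "\<dots> = \<Delta> h (\<lambda>c r. E c * Et k * E r)"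
    by (simp add: E_eq[of "_::'h"] sum2_mult_left mult.assoc)
  finally have 1: "Et k * E h = \<Delta> h (\<lambda>c r. E c * Et k * E r)" .
  have "E h * Et k = \<Delta> h (\<lambda>a b. p a * (p (S b) * Et k))"
    by (simp add: E_eq[of h] sum2_mult_right mult.assoc)
  also have "\<dots> = \<Delta> h (\<lambda>a b. p a * \<Delta> b (\<lambda>c d. p (S c) * Et k * E d))"
    by (rule sum2_cong, subst pS_mult_Et_eq_pS_Et_E, rule refl)
  also have "\<dots> = \<Delta> h (\<lambda>a b. \<Delta> b (\<lambda>c d. p a * p (S c) * Et k * E d))"
    by (simp add: sum2_mult_left mult.assoc)
  also have "\<dots> = \<Delta> h (\<lambda>r d. \<Delta> r (\<lambda>a c. p a * p (S c) * Et k * E d))"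
    by (rule coassoc_sweedler[where sV = sA, symmetric]) (intro linear_intros)
  also have "\<dots> = \<Delta> h (\<lambda>c r. E c * Et k * E r)"
    by (simp add: E_eq[of "_::'h"] sum2_mult_right mult.assoc)
  finally show ?thesis using 1 by simp
qed

lemma p_mult_E_antipode_mult_pS: "\<Delta> h (\<lambda>y w. \<Delta> w (\<lambda>v c. p y * E (S c) * p (S v))) = E h"
proof -
  have "\<Delta> h (\<lambda>y w. \<Delta> w (\<lambda>v c. p y * E (S c) * p (S v)))
      = \<Delta> h (\<lambda>y w. p y * \<Delta> w (\<lambda>v c. \<Delta> v (\<lambda>a b. p (S a) * E (b * S c))))"
    by (simp add: mult.assoc E_mult_pS_eq_pS_mult_E sum2_mult_left)
  also have "\<dots> = \<Delta> h (\<lambda>y w. p y * \<Delta> w (\<lambda>a r. \<Delta> r (\<lambda>b c. p (S a) * E (b * S c))))"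
    by (rule sum2_cong, rule arg_cong2[where f = "(*)"], rule refl,
        rule coassoc_sweedler[where sV = sA]) (intro linear_intros)
  also have "\<dots> = \<Delta> h (\<lambda>y w. p y * \<Delta> w (\<lambda>a r. p (S a) * E (eps_t r)))"
    by (simp add: eps_t_sweedler[of "_::'h"] E_sum2 sum2_mult_left)
  also have "\<dots> = \<Delta> h (\<lambda>y w. p y * \<Delta> w (\<lambda>a r. p (S a) * p (eps_t r)))"
    by (simp only: E_eps_t)
  also have "\<dots> = \<Delta> h (\<lambda>y w. \<Delta> w (\<lambda>a r. p y * p (S a) * p (eps_t r)))"
    by (simp add: sum2_mult_left mult.assoc)
  also have "\<dots> = \<Delta> h (\<lambda>x r. \<Delta> x (\<lambda>y a. p y * p (S a) * p (eps_t r)))"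
    by (rule coassoc_sweedler[where sV = sA, symmetric]) (intro linear_intros)
  also have "\<dots> = \<Delta> h (\<lambda>x r. \<Delta> x (\<lambda>y a. p y * p (S a * eps_t r)))"
    by (rule sum2_cong, rule par_right_E)
  also have "\<dots> = \<Delta> h (\<lambda>y w. \<Delta> w (\<lambda>a r. p y * p (S a * eps_t r)))"
    by (rule coassoc_sweedler[where sV = sA]) (intro linear_intros)
  also have "\<dots> = \<Delta> h (\<lambda>y w. p y * p (S w))"
  proof (rule sum2_cong)
    fix y w show "\<Delta> w (\<lambda>a r. p y * p (S a * eps_t r)) = p y * p (S w)"
      by (simp only: antipode_eq_S_eps_t[of w] p_sum2 sum2_mult_left)
  qed
  also have "\<dots> = E h" by (simp add: E_eq)
  finally show ?thesis .
qed

lemma sum3_E_mult_E: "sum3 (cop2 cop h) (\<lambda>a b c. E (a * S c) * E b) = E h"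
proof -
  have "sum3 (cop2 cop h) (\<lambda>a b c. E (a * S c) * E b) = \<Delta> h (\<lambda>a r. \<Delta> r (\<lambda>b c. E (a * S c) * E b))"
    by (rule sum3_cop2)
  also have "\<dots> = \<Delta> h (\<lambda>a r. \<Delta> r (\<lambda>b c. \<Delta> b (\<lambda>u v. E (a * S c) * (p u * p (S v)))))"
    by (simp only: mult_E_expand)
  also have "\<dots> = \<Delta> h (\<lambda>a r. \<Delta> r (\<lambda>u w. \<Delta> w (\<lambda>v c. E (a * S c) * (p u * p (S v)))))"
    by (rule sum2_cong, rule coassoc_sweedler[where sV = sA]) (intro linear_intros)
  also have "\<dots> = \<Delta> h (\<lambda>y w. \<Delta> y (\<lambda>a u. \<Delta> w (\<lambda>v c. E (a * S c) * (p u * p (S v)))))"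
    by (rule coassoc_sweedler[where sV = sA, symmetric]) (intro linear_intros)
  also have "\<dots> = \<Delta> h (\<lambda>y w. \<Delta> w (\<lambda>v c. \<Delta> y (\<lambda>a u. E (a * S c) * p u) * p (S v)))"
    by (rule sum2_cong, subst sum2_swap, simp add: sum2_mult_right mult.assoc)
  also have "\<dots> = \<Delta> h (\<lambda>y w. \<Delta> w (\<lambda>v c. p y * E (S c) * p (S v)))"
    by (simp add: p_mult_E_eq_E_mult_p)
  also have "\<dots> = E h"
    by (rule p_mult_E_antipode_mult_pS)
  finally show ?thesis .
qed

lemma p_mult_Et_inv_antipode:
  assumes b: "bij S"
  shows "p y * Et k = \<Delta> y (\<lambda>a b. Et (k * inv S b) * p a)"
proof -
  note inv_S_linear = linear_inv_antipode[OF b]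
  have "\<Delta> y (\<lambda>a b. Et (k * inv S b) * p a) = \<Delta> y (\<lambda>a b. \<Delta> a (\<lambda>c d. p c * Et (k * inv S b * d)))"
    by (simp add: Et_mult_p_eq_p_mult_Et)
  also have "\<dots> = \<Delta> y (\<lambda>c r. \<Delta> r (\<lambda>d b. p c * Et (k * inv S b * d)))"
    by (rule coassoc_sweedler[where sV = sA]) (intro linear_intros linear_compose_fun[OF _ inv_S_linear])
  also have "\<dots> = \<Delta> y (\<lambda>c r. p c * Et (k * inv S (eps_s r)))"
    by (simp add: eps_s_sweedler linear_sum2[OF inv_S_linear] inv_antipode_mult[OF b]
        inv_f_f[OF bij_is_inj[OF b]] sum2_mult_left Et_sum2 mult.assoc)
  also have "\<dots> = \<Delta> 1 (\<lambda>a b. p (y*a) * Et (k * inv S (S b)))"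
    by (rule sweedler_eps_s_right[where sV = sA and f = "\<lambda>a b. p a * Et (k * inv S b)"])
      (intro linear_intros linear_compose_fun[OF _ inv_S_linear] inv_S_linear)
  also have "\<dots> = \<Delta> 1 (\<lambda>a b. \<Delta> (k*b) (\<lambda>c d. p (y*a*S c) * p d))"
    by (simp add: inv_f_f[OF bij_is_inj[OF b]] p_mult_Et)
  also have "\<dots> = \<Delta> 1 (\<lambda>a b. \<Delta> k (\<lambda>u v. \<Delta> b (\<lambda>c d. p (y*a*S (u*c)) * p (v*d))))"
    by (rule sum2_cong, rule comult_mult_sweedler[where sV = sA]) (intro linear_intros)
  also have "\<dots> = \<Delta> k (\<lambda>u v. \<Delta> 1 (\<lambda>a b. \<Delta> b (\<lambda>c d. p (y*a*(S c * S u)) * p (v*d))))"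
    by (subst sum2_swap) (simp add: antipode_mult)
  also have "\<dots> = \<Delta> k (\<lambda>u v. \<Delta> 1 (\<lambda>x d. \<Delta> x (\<lambda>a c. p (y*a*(S c * S u)) * p (v*d))))"
    by (rule sum2_cong, rule coassoc_sweedler[where sV = sA, symmetric]) (intro linear_intros)
  also have "\<dots> = \<Delta> k (\<lambda>u v. \<Delta> 1 (\<lambda>x d. p (y * eps_t x * S u) * p (v*d)))"
    by (simp add: eps_t_sweedler[of "_::'h"] sum2_mult_left sum2_mult_right p_sum2 mult.assoc)
  also have "\<dots> = \<Delta> k (\<lambda>u v. \<Delta> 1 (\<lambda>x d. p (y * S (u*x)) * p (v*d)))"
  proof (rule sum2_cong)
    fix u v
    have "\<Delta> 1 (\<lambda>x d. p (y * eps_t x * S u) * p (v*d)) = \<Delta> 1 (\<lambda>a b. p (y * S a * S u) * p (v*(b*1)))"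
      by (rule sweedler_eps_t_left[where sV = sA and f = "\<lambda>a b. p (y * a * S u) * p (v*b)"])
        (intro linear_intros)
    then show "\<Delta> 1 (\<lambda>x d. p (y * eps_t x * S u) * p (v*d)) = \<Delta> 1 (\<lambda>x d. p (y * S (u*x)) * p (v*d))"
      by (simp add: antipode_mult mult.assoc)
  qed
  also have "\<dots> = \<Delta> k (\<lambda>u v. p (y * S u) * p v)"
    by (subst sweedler_unit_right[where sV = sA and f = "\<lambda>u v. p (y * S u) * p v"])
      (intro linear_intros, simp add: mult.assoc)
  also have "\<dots> = p y * Et k" by (simp add: p_mult_Et)
  finally show ?thesis by simp
qed

lemma Et_mult_Et_inv_antipode:
  assumes b: "bij S"
  shows "sum3 (cop2 cop h) (\<lambda>a b c. Et (k * inv S c * a) * Et b) = Et h * Et k"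
proof -
  note inv_S_linear = linear_inv_antipode[OF b]
  have "Et h * Et k = \<Delta> h (\<lambda>a b. p (S a) * (p b * Et k))"
    by (simp add: Et_eq[of h] sum2_mult_right mult.assoc)
  also have "\<dots> = \<Delta> h (\<lambda>a b. p (S a) * \<Delta> b (\<lambda>c d. Et (k * inv S d) * p c))"
    by (rule sum2_cong, subst p_mult_Et_inv_antipode[OF b], rule refl)
  also have "\<dots> = \<Delta> h (\<lambda>a r. \<Delta> r (\<lambda>c d. p (S a) * Et (k * inv S d) * p c))"
    by (simp add: sum2_mult_left mult.assoc)
  also have "\<dots> = \<Delta> h (\<lambda>x d. \<Delta> x (\<lambda>a c. p (S a) * Et (k * inv S d) * p c))"
    by (rule coassoc_sweedler[where sV = sA, symmetric])
      (intro linear_intros inv_S_linear linear_compose_fun[OF _ inv_S_linear])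
  also have "\<dots> = \<Delta> h (\<lambda>x d. \<Delta> x (\<lambda>a c. \<Delta> a (\<lambda>a1 a2. Et (k * inv S d * a1) * p (S a2)) * p c))"
    by (rule sum2_cong, rule sum2_cong, subst pS_mult_Et_eq_Et_mult_pS, rule refl)
  also have "\<dots> = \<Delta> h (\<lambda>x d. \<Delta> x (\<lambda>a c. \<Delta> a (\<lambda>a1 a2. Et (k * inv S d * a1) * (p (S a2) * p c))))"
    by (simp add: sum2_mult_right mult.assoc)
  also have "\<dots> = \<Delta> h (\<lambda>x d. \<Delta> x (\<lambda>a1 w. \<Delta> w (\<lambda>a2 c. Et (k * inv S d * a1) * (p (S a2) * p c))))"
    by (rule sum2_cong, rule coassoc_sweedler[where sV = sA])
      (intro linear_intros inv_S_linear linear_compose_fun[OF _ inv_S_linear])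
  also have "\<dots> = \<Delta> h (\<lambda>x d. \<Delta> x (\<lambda>a1 w. Et (k * inv S d * a1) * Et w))"
    by (simp only: mult_Et_expand)
  also have "\<dots> = \<Delta> h (\<lambda>a1 r. \<Delta> r (\<lambda>w d. Et (k * inv S d * a1) * Et w))"
    by (rule coassoc_sweedler[where sV = sA]) (intro linear_intros inv_S_linear linear_compose_fun[OF _ inv_S_linear])
  also have "\<dots> = sum3 (cop2 cop h) (\<lambda>a b c. Et (k * inv S c * a) * Et b)"
    by (rule sum3_cop2[symmetric])
  finally show ?thesis by simp
qed

lemma E_mult_E_unit_cocommutative:
  assumes c: "cocommutative s cop"
  shows "E h * E k = \<Delta> 1 (\<lambda>a b. E (b * k) * E (a * h))"
proof -
  have "E h * E k = \<Delta> h (\<lambda>a b. p a * (p (S b) * E k))"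
    by (simp add: E_eq[of h] sum2_mult_right mult.assoc)
  also have "\<dots> = \<Delta> h (\<lambda>a b. p a * \<Delta> (S b) (\<lambda>c d. E (c * k) * p d))"
    by (rule sum2_cong, subst p_mult_E_eq_E_mult_p, rule refl)
  also have "\<dots> = \<Delta> h (\<lambda>a b. p a * \<Delta> b (\<lambda>c d. E (S d * k) * p (S c)))"
    by (rule sum2_cong, rule arg_cong2[where f = "(*)"], rule refl,
        rule antipode_comult[where sV = sA]) (intro linear_intros)
  also have "\<dots> = \<Delta> h (\<lambda>a r. \<Delta> r (\<lambda>c d. p a * E (S d * k) * p (S c)))"
    by (simp add: sum2_mult_left mult.assoc)
  also have "\<dots> = \<Delta> h (\<lambda>x d. \<Delta> x (\<lambda>a c. p a * E (S d * k) * p (S c)))"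
    by (rule coassoc_sweedler[where sV = sA, symmetric]) (intro linear_intros)
  also have "\<dots> = \<Delta> h (\<lambda>x d. \<Delta> x (\<lambda>a c. \<Delta> a (\<lambda>a1 a2. E (a1 * (S d * k)) * p a2) * p (S c)))"
    by (rule sum2_cong, rule sum2_cong, subst p_mult_E_eq_E_mult_p, rule refl)
  also have "\<dots> = \<Delta> h (\<lambda>x d. \<Delta> x (\<lambda>a c. \<Delta> a (\<lambda>a1 a2. E (a1 * (S d * k)) * (p a2 * p (S c)))))"
    by (simp add: sum2_mult_right mult.assoc)
  also have "\<dots> = \<Delta> h (\<lambda>x d. \<Delta> x (\<lambda>a1 w. \<Delta> w (\<lambda>a2 c. E (a1 * (S d * k)) * (p a2 * p (S c)))))"
    by (rule sum2_cong, rule coassoc_sweedler[where sV = sA]) (intro linear_intros)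
  also have "\<dots> = \<Delta> h (\<lambda>x d. \<Delta> x (\<lambda>a1 w. E (a1 * (S d * k)) * E w))"
    by (simp only: mult_E_expand)
  also have "\<dots> = \<Delta> h (\<lambda>x d. \<Delta> x (\<lambda>a1 w. E (w * (S d * k)) * E a1))"
    by (rule sum2_cong, rule cocommutative_swap[OF c, where sV = sA]) (intro linear_intros)
  also have "\<dots> = \<Delta> h (\<lambda>a1 r. \<Delta> r (\<lambda>w d. E (w * (S d * k)) * E a1))"
    by (rule coassoc_sweedler[where sV = sA]) (intro linear_intros)
  also have "\<dots> = \<Delta> h (\<lambda>a1 r. E (eps_t r * k) * E a1)"
    by (simp add: eps_t_sweedler[of "_::'h"] sum2_mult_right E_sum2 mult.assoc)
  also have "\<dots> = \<Delta> 1 (\<lambda>a b. E (b * k) * E (a * h))"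
    by (rule sweedler_eps_t_right[where sV = sA and f = "\<lambda>a b. E (b * k) * E a"])
      (intro linear_intros)
  finally show ?thesis .
qed

lemma E_commute_cocommutative:
  assumes c: "cocommutative s cop"
  shows "E h * E k = E k * E h"
proof -
  have "E h * E k = \<Delta> 1 (\<lambda>a b. E (b*k) * E (a*h))" by (rule E_mult_E_unit_cocommutative[OF c])
  also have "\<dots> = \<Delta> 1 (\<lambda>a b. \<Delta> 1 (\<lambda>c d. E (d * (a*h)) * E (c * (b*k))))"
    by (rule sum2_cong, rule E_mult_E_unit_cocommutative[OF c])
  also have "\<dots> = \<Delta> 1 (\<lambda>a b. \<Delta> 1 (\<lambda>c d. E (c * (a*h)) * E (d * (b*k))))"
    by (rule sum2_cong, rule cocommutative_swap[OF c, where sV = sA]) (intro linear_intros)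
  also have "\<dots> = \<Delta> 1 (\<lambda>c d. \<Delta> 1 (\<lambda>a b. E (c * (a*h)) * E (d * (b*k))))"
    by (rule sum2_swap)
  also have "\<dots> = \<Delta> 1 (\<lambda>u v. E (u*h) * E (v*k))"
    by (subst sweedler_unit_left[where sV = sA and h = 1 and f = "\<lambda>u v. E (u*h) * E (v*k)"])
      (intro linear_intros, simp add: mult.assoc)
  finally have 1: "E h * E k = \<Delta> 1 (\<lambda>u v. E (u*h) * E (v*k))" .
  have "E k * E h = \<Delta> 1 (\<lambda>a b. E (b*h) * E (a*k))" by (rule E_mult_E_unit_cocommutative[OF c])
  also have "\<dots> = \<Delta> 1 (\<lambda>a b. E (a*h) * E (b*k))"
    by (rule cocommutative_swap[OF c, where sV = sA]) (intro linear_intros)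
  finally show ?thesis using 1 by simp
qed

end

theorem proposition4p4:
  fixes s :: "'k::field \<Rightarrow> 'h::{ring,monoid_mult} \<Rightarrow> 'h"
    and cop :: "'h \<Rightarrow> ('h \<times> 'h) list" and eps :: "'h \<Rightarrow> 'k" and S :: "'h \<Rightarrow> 'h"
    and sA :: "'k \<Rightarrow> 'a::{ring,monoid_mult} \<Rightarrow> 'a" and p :: "'h \<Rightarrow> 'a"
  assumes wha: "weak_hopf_algebra s cop eps S"
    and par: "par_rep s cop S sA p"
  defines "E \<equiv> Epar cop S p" and "Et \<equiv> Etpar cop S p"
  shows "\<forall>h k.
      E k * p (S h) = sum2 (cop h) (\<lambda>a b. p (S a) * E (b * k))
    \<and> p h * E k = sum2 (cop h) (\<lambda>a b. E (a * k) * p b)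
    \<and> sum2 (cop h) (\<lambda>a b. E a * E b) = E h
    \<and> Et k * p h = sum2 (cop h) (\<lambda>a b. p a * Et (k * b))
    \<and> p (S h) * Et k = sum2 (cop h) (\<lambda>a b. Et (k * a) * p (S b))
    \<and> sum2 (cop h) (\<lambda>a b. Et a * Et b) = Et h
    \<and> p h * E k = sum2 (cop h) (\<lambda>a b. p a * E k * Et b)
    \<and> E k * p (S h) = sum2 (cop h) (\<lambda>a b. Et a * E k * p (S b))
    \<and> Et k * p h = sum2 (cop h) (\<lambda>a b. E a * Et k * p b)
    \<and> p (S h) * Et k = sum2 (cop h) (\<lambda>a b. p (S a) * Et k * E b)
    \<and> E h * Et k = Et k * E h
    \<and> (bij S \<longrightarrow> sum3 (cop2 cop h) (\<lambda>a b c. Et (k * inv S c * a) * Et b) = Et h * Et k)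
    \<and> sum3 (cop2 cop h) (\<lambda>a b c. E (a * S c) * E b) = E h
    \<and> (cocommutative s cop \<longrightarrow> E h * E k = E k * E h)"
proof -
  interpret partial_rep s cop eps S sA p
    by (simp add: partial_rep_def partial_rep_axioms_def weak_hopf_def wha par)
  show ?thesis
    unfolding E_def Et_def
    by (intro allI conjI impI E_mult_pS_eq_pS_mult_E p_mult_E_eq_E_mult_p sum_E_mult_E
        Et_mult_p_eq_p_mult_Et pS_mult_Et_eq_Et_mult_pS sum_Et_mult_Et p_mult_E_eq_p_E_Et
        E_mult_pS_eq_Et_E_pS Et_mult_p_eq_E_Et_p pS_mult_Et_eq_pS_Et_E E_Et_commute
        Et_mult_Et_inv_antipode sum3_E_mult_E E_commute_cocommutative)
      (assumption+)
qed

end
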